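(* Let $(X,d)$ be a complete doubling metric space. Let $(\delta_n)_{n\in\mathbb{N}}$ and $(\gamma_n)_{n\in\mathbb{N}}$ be decreasing sequences of positive reals with $\delta_n\le\gamma_n$ for all $n$, $\lim_{n\to\infty}\gamma_n=0$, $\lim_{n\to\infty}\log\delta_n/\log\delta_{n+1}=1$ and $\lim_{n\to\infty}\log\gamma_n/\log\delta_n=1$. For each $n\in\mathbb{N}$ let $\mathcal{Q}_n$ be a collection of pairwise disjoint Borel subsets of $X$ such that each $Q\in\mathcal{Q}_n$ contains a closed ball of radius $\delta_n$ and is contained in a closed ball of radius $\gamma_n$, and let $E=\bigcap_{n=1}^\infty\bigcup_{Q\in\mathcal{Q}_n}Q$. For $x\in X$ and $r>0$ let $\mathcal{Q}_n(x,r)=\{Q\in\mathcal{Q}_n: Q\cap B(x,r)\neq\emptyset\}$. Let $\mu$ be a non-atomic measure supported on $E$ and let $q\ge0$. Then for all $x\in\mathrm{spt}(\mu)$, \[ \tau_q(\mu,x)=\lim_{r\downarrow0}\liminf_{n\to\infty}\frac{\log\sum_{Q\in\mathcal{Q}_n(x,r)}\mu(Q)^q}{\log\delta_n}. \]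
   Context: A metric space is doubling if there is an integer $N$ such that every closed ball $B(x,r)$ can be covered by $N$ closed balls of radius $r/2$. A "measure" means a nontrivial Borel regular outer measure defined on all subsets, finite on bounded sets; $\mathrm{spt}(\mu)$ is its support. A packing is a countable collection of pairwise disjoint closed balls; a $\delta$-packing of $A$ is a packing by balls of radius $\delta$ with centers in $A$. For compact $A\subset X$, $q\ge0$, $\delta>0$: $S_q(\mu,A,\delta)=\sup\{\sum_{B\in\mathcal{B}}\mu(B)^q:\mathcal{B}$ is a $\delta$-packing of $A\cap\mathrm{spt}(\mu)\}$ (with $0^q=0$ also for $q=0$), and the local $L^q$-spectrum is $\tau_q(\mu,x)=\lim_{r\downarrow0}\liminf_{\delta\downarrow0}\log S_q(\mu,B(x,r),\delta)/\log\delta$. *)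

theory Defs
  imports "HOL-Analysis.Analysis"
begin

definition doubling_space :: "'a::metric_space itself \<Rightarrow> bool" where
  "doubling_space _ \<longleftrightarrow> (\<exists>N::nat. \<forall>(x::'a) r. r > 0 \<longrightarrow>
      (\<exists>C. finite C \<and> card C \<le> N \<and> cball x r \<subseteq> (\<Union>c\<in>C. cball c (r/2))))"

definition is_measure :: "('a::metric_space set \<Rightarrow> ennreal) \<Rightarrow> bool" where
  "is_measure \<mu> \<longleftrightarrow>
     \<mu> {} = 0 \<and>
     (\<forall>A B. A \<subseteq> B \<longrightarrow> \<mu> A \<le> \<mu> B) \<and>
     (\<forall>A::nat \<Rightarrow> 'a set. \<mu> (\<Union>i. A i) \<le> (\<Sum>i. \<mu> (A i))) \<and>
     (\<forall>B\<in>sets borel. \<forall>A. \<mu> A = \<mu> (A \<inter> B) + \<mu> (A - B)) \<and>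
     (\<forall>A. \<exists>B\<in>sets borel. A \<subseteq> B \<and> \<mu> B = \<mu> A) \<and>
     (\<forall>A. bounded A \<longrightarrow> \<mu> A < \<infinity>) \<and>
     (\<exists>A. \<mu> A \<noteq> 0)"

definition spt :: "('a::metric_space set \<Rightarrow> ennreal) \<Rightarrow> 'a set" where
  "spt \<mu> = {x. \<forall>r>0. \<mu> (ball x r) > 0}"

definition delta_packing :: "real \<Rightarrow> 'a::metric_space set \<Rightarrow> 'a set set \<Rightarrow> bool" where
  "delta_packing \<delta> A \<B> \<longleftrightarrow> countable \<B> \<and>
     (\<forall>B1\<in>\<B>. \<forall>B2\<in>\<B>. B1 \<noteq> B2 \<longrightarrow> B1 \<inter> B2 = {}) \<and>
     (\<forall>B\<in>\<B>. \<exists>c\<in>A. B = cball c \<delta>)"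

text \<open>mu(B)^q with the convention 0^q = 0 (also for q = 0); note 0 powr q = 0 in Isabelle.\<close>
definition mpow :: "('a set \<Rightarrow> ennreal) \<Rightarrow> real \<Rightarrow> 'a set \<Rightarrow> ennreal" where
  "mpow \<mu> q B = ennreal (enn2real (\<mu> B) powr q)"

definition S_q :: "('a::metric_space set \<Rightarrow> ennreal) \<Rightarrow> real \<Rightarrow> 'a set \<Rightarrow> real \<Rightarrow> ennreal" where
  "S_q \<mu> q A \<delta> = (SUP \<B>\<in>{\<B>. delta_packing \<delta> (A \<inter> spt \<mu>) \<B>}. \<Sum>\<^sub>\<infinity>B\<in>\<B>. mpow \<mu> q B)"

text \<open>Local L^q-spectrum (ratio of logarithms is base independent, so ln is used).\<close>
definition tau_q :: "('a::metric_space set \<Rightarrow> ennreal) \<Rightarrow> real \<Rightarrow> 'a \<Rightarrow> ereal" where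
  "tau_q \<mu> q x = Lim (at_right 0) (\<lambda>r.
      Liminf (at_right 0) (\<lambda>\<delta>. ereal (ln (enn2real (S_q \<mu> q (cball x r) \<delta>)) / ln \<delta>)))"

end

theory Submission
  imports Defs
begin

text \<open>Both sides are lower exponents of \<open>q\<close>-th power sums over a family of disjoint sets of size
  about \<open>\<delta>\<close> near \<open>x\<close>: balls of a \<open>\<delta>\<close>-packing centred in the support, or the cells of
  \<open>Q n\<close>. In a doubling space a set of diameter \<open>O(\<gamma> n)\<close> meets only boundedly many members of
  either family (in terms of \<open>\<gamma> n / \<delta> (Suc n)\<close>), and the cells are covered, up to a
  \<open>\<mu>\<close>-null set, by balls around a maximal \<open>\<delta> n\<close>-separated subset of the support, which after a
  bounded colouring splits into packings. Hence for \<open>\<delta> (Suc n) \<le> d < \<delta> n\<close> the packing sum of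
  \<open>B(x,r)\<close> at scale \<open>d\<close> and the cell sums of \<open>B(x,2r)\<close> at levels \<open>n\<close> and \<open>Suc n\<close> bound
  each other up to a factor \<open>C n\<close>, and the hypotheses on the ratios of logarithms make
  \<open>ln (C n)\<close> negligible against \<open>ln (\<delta> n)\<close>. So each lower exponent at radius \<open>r\<close> is
  squeezed between the other one at radii \<open>r/2\<close> and \<open>2r\<close>; as the packing exponent is monotone
  in \<open>r\<close>, both have the same limit as \<open>r \<rightarrow> 0\<close>.\<close>

lemma exists_colour_not_in_image:
  assumes "finite F" "card F < K"
  shows "\<exists>c<K. c \<notin> col ` F"
proof -
  have "card (col ` F) < K" using card_image_le[OF assms(1), of col] assms(2) by linarith
  then show ?thesis using card_mono[of "col ` F" "{..<K}"] assms(1) by auto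
qed

lemma bounded_degree_colouring:
  assumes "finite Z" "\<And>z z'. adj z z' \<Longrightarrow> adj z' z"
    and "\<And>z. z \<in> Z \<Longrightarrow> card {z'\<in>Z. z' \<noteq> z \<and> adj z z'} < K"
  shows "\<exists>col. (\<forall>z\<in>Z. col z < K) \<and> (\<forall>z\<in>Z. \<forall>z'\<in>Z. z \<noteq> z' \<and> adj z z' \<longrightarrow> col z \<noteq> col z')"
  using assms
proof (induction Z rule: finite_induct)
  case empty
  show ?case by (rule exI[of _ "\<lambda>_. 0"]) simp
next
  case (insert a F)
  have deg_F: "card {z'\<in>F. z' \<noteq> z \<and> adj z z'} < K" if "z \<in> F" for z
  proof -
    have "card {z'\<in>F. z' \<noteq> z \<and> adj z z'} \<le> card {z'\<in>insert a F. z' \<noteq> z \<and> adj z z'}"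
      by (rule card_mono) (use insert.hyps(1) in auto)
    also have "\<dots> < K" by (rule insert.prems(2)) (use that in simp)
    finally show ?thesis .
  qed
  from insert.IH[OF insert.prems(1) deg_F] obtain col where
    "(\<forall>z\<in>F. col z < K) \<and> (\<forall>z\<in>F. \<forall>z'\<in>F. z \<noteq> z' \<and> adj z z' \<longrightarrow> col z \<noteq> col z')" ..
  then have col_lt: "\<forall>z\<in>F. col z < K"
    and col_proper: "\<forall>z\<in>F. \<forall>z'\<in>F. z \<noteq> z' \<and> adj z z' \<longrightarrow> col z \<noteq> col z'"
    by blast+
  have "card {z'\<in>F. adj a z'} \<le> card {z'\<in>insert a F. z' \<noteq> a \<and> adj a z'}"
    by (rule card_mono) (use insert.hyps in auto)
  also have "\<dots> < K" by (rule insert.prems(2)) simp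
  finally obtain c where c: "c < K" "c \<notin> col ` {z'\<in>F. adj a z'}"
    using exists_colour_not_in_image[of "{z'\<in>F. adj a z'}" K col] insert.hyps(1) by auto
  define col' where "col' = col(a := c)"
  have new_colour: "col' z \<noteq> col' a" if "z \<in> F" "adj a z" for z
    using that c(2) insert.hyps(2) unfolding col'_def by auto
  have "col' z \<noteq> col' z'"
    if z: "z \<in> insert a F" "z' \<in> insert a F" "z \<noteq> z'" "adj z z'" for z z'
  proof -
    consider "z = a" | "z' = a" | "z \<in> F" "z' \<in> F" using z(1,2) by blast
    then show ?thesis
    proof cases
      case 1
      then show ?thesis using new_colour[of z'] z by auto
    next
      case 2
      then show ?thesis using new_colour[of z] z insert.prems(1) by auto
    next
      case 3
      then have "z \<noteq> a" "z' \<noteq> a" using insert.hyps(2) by auto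
      then show ?thesis using col_proper 3 z(3,4) unfolding col'_def by simp
    qed
  qed
  moreover have "\<forall>z\<in>insert a F. col' z < K" using col_lt c(1) by (simp add: col'_def)
  ultimately show ?case by blast
qed

lemma powr_sum_le_card_powr:
  fixes b :: "'j \<Rightarrow> real"
  assumes S: "finite S" and K: "real (card S) \<le> K" "K \<ge> 1"
    and b: "\<And>j. j \<in> S \<Longrightarrow> b j \<ge> 0" and q: "q \<ge> 0"
  shows "(\<Sum>j\<in>S. b j) powr q \<le> K powr q * (\<Sum>j\<in>S. b j powr q)"
proof (cases "S = {}")
  case False
  define m where "m = Max (b ` S)"
  have "m \<in> b ` S" unfolding m_def using S False by simp
  then obtain j0 where j0: "j0 \<in> S" "m = b j0" by blast
  have m0: "m \<ge> 0" using b j0 by simp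
  have "(\<Sum>j\<in>S. b j) \<le> real (card S) * m"
    using sum_bounded_above[of S b m] S unfolding m_def by simp
  also have "\<dots> \<le> K * m" using K(1) m0 by (rule mult_right_mono)
  finally have "(\<Sum>j\<in>S. b j) powr q \<le> (K * m) powr q"
    using b q by (intro powr_mono2 sum_nonneg) auto
  also have "\<dots> = K powr q * m powr q" using K(2) m0 by (simp add: powr_mult)
  also have "\<dots> \<le> K powr q * (\<Sum>j\<in>S. b j powr q)"
    unfolding j0(2) using j0(1) S by (intro mult_left_mono member_le_sum) auto
  finally show ?thesis .
qed simp

lemma sum_powr_le_bounded_incidence:
  fixes a :: "'i \<Rightarrow> real" and b :: "'j \<Rightarrow> real"
  assumes I: "finite I" and J: "finite J" and K: "K \<ge> 1" and q: "q \<ge> 0"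
    and a0: "\<And>i. i \<in> I \<Longrightarrow> a i \<ge> 0" and b0: "\<And>j. j \<in> J \<Longrightarrow> b j \<ge> 0"
    and ab: "\<And>i. i \<in> I \<Longrightarrow> a i \<le> (\<Sum>j\<in>{j\<in>J. R i j}. b j)"
    and deg_I: "\<And>i. i \<in> I \<Longrightarrow> real (card {j\<in>J. R i j}) \<le> K"
    and deg_J: "\<And>j. j \<in> J \<Longrightarrow> real (card {i\<in>I. R i j}) \<le> K"
  shows "(\<Sum>i\<in>I. a i powr q) \<le> K powr (q+1) * (\<Sum>j\<in>J. b j powr q)"
proof -
  have "(\<Sum>i\<in>I. a i powr q) \<le> (\<Sum>i\<in>I. K powr q * (\<Sum>j\<in>{j\<in>J. R i j}. b j powr q))"
  proof (rule sum_mono)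
    fix i assume i: "i \<in> I"
    have "a i powr q \<le> (\<Sum>j\<in>{j\<in>J. R i j}. b j) powr q"
      by (rule powr_mono2[OF q a0[OF i] ab[OF i]])
    also have "\<dots> \<le> K powr q * (\<Sum>j\<in>{j\<in>J. R i j}. b j powr q)"
      using J deg_I[OF i] K b0 q by (intro powr_sum_le_card_powr) auto
    finally show "a i powr q \<le> K powr q * (\<Sum>j\<in>{j\<in>J. R i j}. b j powr q)" .
  qed
  also have "\<dots> = K powr q * (\<Sum>j\<in>J. \<Sum>i\<in>{i\<in>I. R i j}. b j powr q)"
    by (simp add: sum_distrib_left[symmetric] sum.swap_restrict[OF I J])
  also have "\<dots> \<le> K powr q * (\<Sum>j\<in>J. K * b j powr q)"
    using deg_J by (intro mult_left_mono sum_mono) (auto intro: mult_right_mono)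
  also have "\<dots> = K powr (q+1) * (\<Sum>j\<in>J. b j powr q)"
    using K by (simp add: powr_add sum_distrib_left mult.assoc)
  finally show ?thesis .
qed

lemma enn2real_le_sum:
  fixes a :: ennreal and f :: "'i \<Rightarrow> ennreal"
  assumes F: "finite F" and fin: "\<And>i. i \<in> F \<Longrightarrow> f i < top" and le: "a \<le> (\<Sum>i\<in>F. f i)"
  shows "enn2real a \<le> (\<Sum>i\<in>F. enn2real (f i))"
proof -
  have "(\<Sum>i\<in>F. f i) < top" using ennreal_sum_less_top[OF F] fin by blast
  then have "enn2real a \<le> enn2real (\<Sum>i\<in>F. f i)" by (rule enn2real_mono[OF le])
  also have "\<dots> = (\<Sum>i\<in>F. enn2real (f i))" using enn2real_sum[of F f] fin by simp
  finally show ?thesis .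
qed

lemma min_divide_le_divide_neg:
  fixes s l l1 l2 :: real
  assumes "l2 \<le> l" "l \<le> l1" "l1 < 0"
  shows "min (s / l1) (s / l2) \<le> s / l"
proof (cases "s \<ge> 0")
  case True
  then have "s / l1 \<le> s / l"
    using assms divide_left_mono_neg[of l l1 "-s"] by (simp add: mult_neg_neg)
  then show ?thesis by simp
next
  case False
  then have "s / l2 \<le> s / l"
    using assms divide_left_mono_neg[of l2 l s] by (simp add: mult_neg_neg)
  then show ?thesis by simp
qed

lemma ln_le_of_le_mult:
  fixes s c u :: real
  assumes "0 < s" "0 < c" "0 < u" "s \<le> c * u"
  shows "ln s \<le> ln c + ln u"
proof -
  have "ln s \<le> ln (c * u)" using assms by simp
  also have "\<dots> = ln c + ln u" using assms by (simp add: ln_mult)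
  finally show ?thesis .
qed

lemma ln_ratio_bracket:
  fixes s c u1 u2 l l1 l2 :: real
  assumes s: "s \<le> c + u1" "s \<le> c + u2" and l: "l2 \<le> l" "l \<le> l1" "l1 < 0"
  shows "min (u1 / l1) (u2 / l2) + min (c / l1) (c / l2) \<le> s / l"
proof -
  have "min (u1 / l1) (u2 / l2) + min (c / l1) (c / l2) \<le> (c + u1) / l1"
    by (simp add: add_divide_distrib add_mono)
  also have "\<dots> \<le> s / l1" using s(1) l by (intro divide_right_mono_neg) auto
  finally have 1: "min (u1 / l1) (u2 / l2) + min (c / l1) (c / l2) \<le> s / l1" .
  have "min (u1 / l1) (u2 / l2) + min (c / l1) (c / l2) \<le> (c + u2) / l2"
    by (simp add: add_divide_distrib add_mono)
  also have "\<dots> \<le> s / l2" using s(2) l by (intro divide_right_mono_neg) auto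
  finally have "min (u1 / l1) (u2 / l2) + min (c / l1) (c / l2) \<le> min (s / l1) (s / l2)"
    using 1 by simp
  also have "\<dots> \<le> s / l" by (rule min_divide_le_divide_neg[OF l])
  finally show ?thesis .
qed

section \<open>Lower limits at zero\<close>

lemma decseq_bracket:
  fixes \<delta> :: "nat \<Rightarrow> real"
  assumes dec: "decseq \<delta>" and lim: "\<delta> \<longlonglongrightarrow> 0" and d: "d > 0" "d < \<delta> n0"
  shows "\<exists>n\<ge>n0. \<delta> (Suc n) \<le> d \<and> d < \<delta> n"
proof -
  obtain m where "\<delta> m < d" using order_tendstoD(2)[OF lim d(1)] eventually_sequentially by auto
  define m0 where "m0 = (LEAST m. \<delta> m \<le> d)"
  have m0: "\<delta> m0 \<le> d" unfolding m0_def by (rule LeastI[of _ m]) (use \<open>\<delta> m < d\<close> in simp)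
  have "m0 > n0"
    using d(2) m0 dec[unfolded decseq_def, rule_format, of m0 n0] by (cases "m0 \<le> n0") auto
  then obtain n where n: "m0 = Suc n" "n \<ge> n0" by (cases m0) auto
  have "\<not> \<delta> n \<le> d" using n unfolding m0_def by (metis lessI not_less_Least)
  then show ?thesis using n m0 by (intro exI[of _ n]) auto
qed

lemma Liminf_sequentially_le_Liminf_at_right_0:
  fixes \<delta> a e :: "nat \<Rightarrow> real" and b :: "real \<Rightarrow> real"
  assumes \<delta>: "decseq \<delta>" "\<delta> \<longlonglongrightarrow> 0" "\<And>n. \<delta> n > 0" and e: "e \<longlonglongrightarrow> 0"
    and bracket: "\<forall>\<^sub>F n in sequentially.
      \<forall>d. \<delta> (Suc n) \<le> d \<and> d < \<delta> n \<longrightarrow> min (a n) (a (Suc n)) + e n \<le> b d"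
  shows "Liminf sequentially (\<lambda>n. ereal (a n)) \<le> Liminf (at_right 0) (\<lambda>d. ereal (b d))"
proof (rule le_Liminf_iff[THEN iffD2], intro allI impI)
  fix y assume y: "y < Liminf sequentially (\<lambda>n. ereal (a n))"
  show "\<forall>\<^sub>F d in at_right 0. y < ereal (b d)"
  proof (cases y)
    case (real y0)
    obtain z where z: "y0 < z" "ereal z < Liminf sequentially (\<lambda>n. ereal (a n))"
      using ereal_dense2[OF y[unfolded real]] by auto
    have "\<forall>\<^sub>F n in sequentially. z < a n" using less_LiminfD[OF z(2)] by simp
    moreover from this have "\<forall>\<^sub>F n in sequentially. z < a (Suc n)"
      by (rule eventually_sequentially_Suc[THEN iffD2])
    moreover have "\<forall>\<^sub>F n in sequentially. y0 - z < e n"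
      using order_tendstoD(1)[OF e] z(1) by simp
    ultimately have "\<forall>\<^sub>F n in sequentially. z < a n \<and> z < a (Suc n) \<and> y0 - z < e n \<and>
        (\<forall>d. \<delta> (Suc n) \<le> d \<and> d < \<delta> n \<longrightarrow> min (a n) (a (Suc n)) + e n \<le> b d)"
      using bracket by (intro eventually_conj)
    then obtain n0 where n0: "\<And>n. n \<ge> n0 \<Longrightarrow> z < a n \<and> z < a (Suc n) \<and> y0 - z < e n \<and>
        (\<forall>d. \<delta> (Suc n) \<le> d \<and> d < \<delta> n \<longrightarrow> min (a n) (a (Suc n)) + e n \<le> b d)"
      unfolding eventually_sequentially by blast
    have "\<forall>\<^sub>F d in at_right 0. d \<in> {0<..<\<delta> n0}" by (rule eventually_at_right_real) (use \<delta>(3) in simp)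
    then show ?thesis
    proof (rule eventually_mono)
      fix d assume "d \<in> {0<..<\<delta> n0}"
      then obtain n where "n \<ge> n0" "\<delta> (Suc n) \<le> d" "d < \<delta> n"
        using decseq_bracket[OF \<delta>(1,2)] by auto
      with n0[of n] show "y < ereal (b d)" unfolding real by fastforce
    qed
  qed (use y in auto)
qed

lemma Liminf_at_right_0_le_Liminf_sequentially:
  fixes \<delta> a e :: "nat \<Rightarrow> real" and b :: "real \<Rightarrow> real"
  assumes \<delta>: "filterlim \<delta> (at_right 0) sequentially" and e: "e \<longlonglongrightarrow> 0"
    and le: "\<forall>\<^sub>F n in sequentially. b (\<delta> n) + e n \<le> a n"
  shows "Liminf (at_right 0) (\<lambda>d. ereal (b d)) \<le> Liminf sequentially (\<lambda>n. ereal (a n))"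
proof (rule le_Liminf_iff[THEN iffD2], intro allI impI)
  fix y assume y: "y < Liminf (at_right 0) (\<lambda>d. ereal (b d))"
  show "\<forall>\<^sub>F n in sequentially. y < ereal (a n)"
  proof (cases y)
    case (real y0)
    obtain z where z: "y0 < z" "ereal z < Liminf (at_right 0) (\<lambda>d. ereal (b d))"
      using ereal_dense2[OF y[unfolded real]] by auto
    have "\<forall>\<^sub>F d in at_right 0. z < b d" using less_LiminfD[OF z(2)] by simp
    then have "\<forall>\<^sub>F n in sequentially. z < b (\<delta> n)"
      by (rule filterlim_iff[THEN iffD1, OF \<delta>, rule_format])
    moreover have "\<forall>\<^sub>F n in sequentially. y0 - z < e n"
      using order_tendstoD(1)[OF e] z(1) by simp
    ultimately show ?thesis
      using le by eventually_elim (simp add: real)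
  qed (use y in auto)
qed

lemma antimono_tendsto_at_right_0:
  fixes F :: "real \<Rightarrow> 'b::{complete_linorder, linorder_topology}"
  assumes anti: "\<And>r s. 0 < r \<Longrightarrow> r \<le> s \<Longrightarrow> F s \<le> F r"
  shows "(F \<longlongrightarrow> (SUP r\<in>{0<..}. F r)) (at_right 0)"
proof (rule order_tendstoI)
  fix a assume "a < (SUP r\<in>{0<..}. F r)"
  then obtain r0 where r0: "r0 > 0" "a < F r0" by (auto simp: less_SUP_iff)
  have "\<forall>\<^sub>F r in at_right 0. r \<in> {0<..<r0}" by (rule eventually_at_right_real) (use r0 in simp)
  then show "\<forall>\<^sub>F r in at_right 0. a < F r"
    by eventually_elim (use r0 anti in \<open>fastforce intro: order.strict_trans2\<close>)
next
  fix a assume a: "(SUP r\<in>{0<..}. F r) < a"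
  show "\<forall>\<^sub>F r in at_right 0. F r < a"
  proof (rule eventually_mono[OF eventually_at_right_less])
    fix r :: real assume "0 < r"
    then have "F r \<le> (SUP r\<in>{0<..}. F r)" by (intro SUP_upper) simp
    then show "F r < a" using a by (rule order.strict_trans1)
  qed
qed

lemma tendsto_at_right_0_scaled_sandwich:
  fixes F G :: "real \<Rightarrow> 'b::{complete_linorder, linorder_topology}"
  assumes anti: "\<And>r s. 0 < r \<Longrightarrow> r \<le> s \<Longrightarrow> F s \<le> F r"
    and lower: "\<And>r. 0 < r \<Longrightarrow> F (2 * r) \<le> G r"
    and upper: "\<And>r. 0 < r \<Longrightarrow> G (2 * r) \<le> F r"
  shows "(G \<longlongrightarrow> Lim (at_right 0) F) (at_right 0)"
proof -
  have lim: "(F \<longlongrightarrow> (SUP r\<in>{0<..}. F r)) (at_right 0)" by (rule antimono_tendsto_at_right_0[OF anti])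
  then have F: "(F \<longlongrightarrow> Lim (at_right 0) F) (at_right 0)"
    by (simp add: tendsto_Lim[OF trivial_limit_at_right_real lim])
  have scale: "filterlim (\<lambda>r. c * r) (at_right 0) (at_right (0::real))" if "c > 0" for c :: real
  proof (rule tendsto_imp_filterlim_at_right)
    show "((\<lambda>r. c * r) \<longlongrightarrow> 0) (at_right 0)" by (rule tendsto_mult_right_zero[OF tendsto_ident_at])
    show "\<forall>\<^sub>F r in at_right 0. 0 < c * r"
      using eventually_at_right_less[of "0::real"] by (rule eventually_mono) (use that in simp)
  qed
  show ?thesis
  proof (rule tendsto_sandwich)
    show "\<forall>\<^sub>F r in at_right 0. F (2 * r) \<le> G r"
      using eventually_at_right_less by (rule eventually_mono) (rule lower)
    show "\<forall>\<^sub>F r in at_right 0. G r \<le> F (1/2 * r)"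
    proof (rule eventually_mono[OF eventually_at_right_less])
      fix r :: real assume "0 < r"
      then show "G r \<le> F (1/2 * r)" using upper[of "r/2"] by simp
    qed
    show "((\<lambda>r. F (2 * r)) \<longlongrightarrow> Lim (at_right 0) F) (at_right 0)"
      by (rule filterlim_compose[OF F scale]) simp
    show "((\<lambda>r. F (1/2 * r)) \<longlongrightarrow> Lim (at_right 0) F) (at_right 0)"
      by (rule filterlim_compose[OF F scale]) simp
  qed
qed
section \<open>Doubling spaces and outer measures\<close>

text \<open>With doubling constant \<open>N\<close>, a ball of radius \<open>t \<rho>\<close> is covered by \<open>doubling_bound N t\<close>
  balls of radius \<open>\<rho> / 2\<close>, so it contains at most that many points of a \<open>\<rho>\<close>-separated set.\<close>
definition doubling_bound :: "nat \<Rightarrow> real \<Rightarrow> nat" where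
  "doubling_bound N t = N ^ nat \<lceil>log 2 (2 * t)\<rceil>"

lemma doubling_bound_ge_1: "N \<ge> 1 \<Longrightarrow> real (doubling_bound N t) \<ge> 1"
  by (simp add: doubling_bound_def)

lemma doubling_bound_mono:
  assumes "N \<ge> 1" "0 < t" "t \<le> t'"
  shows "doubling_bound N t \<le> doubling_bound N t'"
  unfolding doubling_bound_def
  using assms by (intro power_increasing nat_mono ceiling_mono) auto

lemma ln_doubling_bound_le:
  assumes N: "N \<ge> 1" and t: "t \<ge> 1/2"
  shows "ln (doubling_bound N t) \<le> (log 2 (2 * t) + 1) * ln N"
proof -
  define k where "k = nat \<lceil>log 2 (2 * t)\<rceil>"
  have "log 2 (2 * t) \<ge> 0" using t by simp
  then have "real k \<le> log 2 (2 * t) + 1" unfolding k_def by linarith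
  moreover have "ln (doubling_bound N t) = real k * ln N"
    using N by (simp add: doubling_bound_def k_def ln_realpow)
  ultimately show ?thesis using N by (simp add: mult_right_mono)
qed

lemma doubling_space_constant:
  assumes "doubling_space TYPE('a::metric_space)"
  shows "\<exists>N\<ge>1. \<forall>(x::'a) r. r > 0 \<longrightarrow>
    (\<exists>C. finite C \<and> card C \<le> N \<and> cball x r \<subseteq> (\<Union>c\<in>C. cball c (r/2)))"
proof -
  obtain N where "\<forall>(x::'a) r. r > 0 \<longrightarrow>
      (\<exists>C. finite C \<and> card C \<le> N \<and> cball x r \<subseteq> (\<Union>c\<in>C. cball c (r/2)))"
    using assms unfolding doubling_space_def by blast
  then have "\<forall>(x::'a) r. r > 0 \<longrightarrow>
      (\<exists>C. finite C \<and> card C \<le> max N 1 \<and> cball x r \<subseteq> (\<Union>c\<in>C. cball c (r/2)))"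
    by (meson le_max_iff_disj)
  then show ?thesis by (intro exI[of _ "max N 1"]) simp
qed

locale doubling_measure =
  fixes \<mu> :: "'a::metric_space set \<Rightarrow> ennreal" and N :: nat
  assumes doubling: "\<And>(x::'a) r. r > 0 \<Longrightarrow> \<exists>C. finite C \<and> card C \<le> N \<and> cball x r \<subseteq> (\<Union>c\<in>C. cball c (r/2))"
    and N_ge_1: "N \<ge> 1"
    and \<mu>_measure: "is_measure \<mu>"
begin

lemma \<mu>_empty: "\<mu> {} = 0"
  using \<mu>_measure unfolding is_measure_def by (elim conjE)

lemma \<mu>_mono: "A \<subseteq> B \<Longrightarrow> \<mu> A \<le> \<mu> B"
proof -
  have "\<forall>A B. A \<subseteq> B \<longrightarrow> \<mu> A \<le> \<mu> B" using \<mu>_measure unfolding is_measure_def by (elim conjE)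
  then show "A \<subseteq> B \<Longrightarrow> \<mu> A \<le> \<mu> B" by blast
qed

lemma \<mu>_countably_subadditive: "\<mu> (\<Union>i. A i) \<le> (\<Sum>i. \<mu> (A i))"
proof -
  have "\<forall>A::nat \<Rightarrow> 'a set. \<mu> (\<Union>i. A i) \<le> (\<Sum>i. \<mu> (A i))"
    using \<mu>_measure unfolding is_measure_def by (elim conjE)
  then show ?thesis by blast
qed

lemma \<mu>_cball_finite: "A \<subseteq> cball c r \<Longrightarrow> \<mu> A < top"
proof -
  have "\<forall>A. bounded A \<longrightarrow> \<mu> A < top"
    using \<mu>_measure unfolding is_measure_def infinity_ennreal_def by (elim conjE)
  then show "A \<subseteq> cball c r \<Longrightarrow> \<mu> A < top" using bounded_subset[OF bounded_cball] by blast
qed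

lemma \<mu>_Un_le: "\<mu> (A \<union> B) \<le> \<mu> A + \<mu> B"
proof -
  define S where "S i = (if i = (0::nat) then A else if i = 1 then B else {})" for i
  have "A \<union> B \<subseteq> (\<Union>i. S i)"
  proof
    fix x assume "x \<in> A \<union> B"
    then have "x \<in> S 0 \<or> x \<in> S 1" unfolding S_def by auto
    then show "x \<in> (\<Union>i. S i)" by blast
  qed
  then have "\<mu> (A \<union> B) \<le> \<mu> (\<Union>i. S i)" by (rule \<mu>_mono)
  also have "\<dots> \<le> (\<Sum>i. \<mu> (S i))" by (rule \<mu>_countably_subadditive)
  also have "\<dots> = (\<Sum>i\<in>{0,1}. \<mu> (S i))"
    by (rule suminf_finite) (auto simp: S_def \<mu>_empty)
  also have "\<dots> = \<mu> A + \<mu> B" by (simp add: S_def)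
  finally show ?thesis .
qed

lemma \<mu>_UN_le: "finite I \<Longrightarrow> \<mu> (\<Union>i\<in>I. f i) \<le> (\<Sum>i\<in>I. \<mu> (f i))"
proof (induction I rule: finite_induct)
  case (insert i I)
  have "\<mu> (\<Union>j\<in>insert i I. f j) \<le> \<mu> (f i) + \<mu> (\<Union>j\<in>I. f j)"
    using \<mu>_Un_le by simp
  also have "\<dots> \<le> \<mu> (f i) + (\<Sum>j\<in>I. \<mu> (f j))" using insert.IH by (rule add_left_mono)
  finally show ?case using insert by simp
qed (simp add: \<mu>_empty)

lemma doubling_cover_iter:
  fixes x :: 'a
  assumes r: "r > 0"
  shows "\<exists>C. finite C \<and> card C \<le> N^k \<and> cball x r \<subseteq> (\<Union>c\<in>C. cball c (r/2^k))"
proof (induction k)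
  case 0
  show ?case by (rule exI[of _ "{x}"]) auto
next
  case (Suc k)
  then obtain C where C: "finite C" "card C \<le> N^k" "cball x r \<subseteq> (\<Union>c\<in>C. cball c (r/2^k))" by blast
  have rk: "r/2^k > 0" using r by simp
  have "\<forall>c::'a. \<exists>D. finite D \<and> card D \<le> N \<and> cball c (r/2^k) \<subseteq> (\<Union>d\<in>D. cball d (r/2^k/2))"
    using doubling[OF rk] by blast
  from choice[OF this] obtain D where D0: "\<forall>c::'a. finite (D c) \<and> card (D c) \<le> N \<and>
     cball c (r/2^k) \<subseteq> (\<Union>d\<in>D c. cball d (r/2^k/2))" by blast
  have D: "\<And>c. finite (D c)" "\<And>c. card (D c) \<le> N"
     "\<And>c. cball c (r/2^k) \<subseteq> (\<Union>d\<in>D c. cball d (r/2^k/2))" using D0 by auto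
  define C' where "C' = (\<Union>c\<in>C. D c)"
  have "finite C'" using C(1) D(1) by (simp add: C'_def)
  moreover have "card C' \<le> N^(Suc k)"
  proof -
    have "card C' \<le> (\<Sum>c\<in>C. card (D c))" unfolding C'_def by (rule card_UN_le[OF C(1)])
    also have "\<dots> \<le> (\<Sum>c\<in>C. N)" by (rule sum_mono) (use D(2) in auto)
    also have "\<dots> \<le> N^k * N" using C(2) by simp
    finally show ?thesis by (simp add: mult.commute)
  qed
  moreover have "cball x r \<subseteq> (\<Union>c\<in>C'. cball c (r/2^(Suc k)))"
  proof
    fix y assume "y \<in> cball x r"
    then obtain c where "c \<in> C" "y \<in> cball c (r/2^k)" using C(3) by blast
    then obtain d where "d \<in> D c" "y \<in> cball d (r/2^k/2)" using D(3) by blast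
    then have "y \<in> cball d (r/2^(Suc k))" by (simp add: mult.commute)
    then show "y \<in> (\<Union>c\<in>C'. cball c (r/2^(Suc k)))" using \<open>c\<in>C\<close> \<open>d \<in> D c\<close> by (auto simp: C'_def)
  qed
  ultimately show ?case by blast
qed

lemma separated_subset_card_le:
  fixes z :: 'a
  assumes \<rho>: "\<rho> > 0" and R: "R > 0" and P: "P \<subseteq> cball z R"
    and sep: "\<forall>p\<in>P. \<forall>p'\<in>P. p \<noteq> p' \<longrightarrow> dist p p' > \<rho>"
  shows "finite P \<and> card P \<le> doubling_bound N (R/\<rho>)"
proof -
  define k where "k = nat \<lceil>log 2 (2*(R/\<rho>))\<rceil>"
  have "log 2 (2*(R/\<rho>)) \<le> real k" unfolding k_def by (rule real_nat_ceiling_ge)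
  then have "2 powr (log 2 (2*(R/\<rho>))) \<le> 2 powr (real k)" by (rule powr_mono) simp
  then have "2*(R/\<rho>) \<le> 2^k" using \<rho> R by (simp add: powr_realpow)
  then have small: "2*(R/2^k) \<le> \<rho>" using \<rho> by (simp add: field_simps)
  obtain C where C: "finite C" "card C \<le> N^k" "cball z R \<subseteq> (\<Union>c\<in>C. cball c (R/2^k))"
    using doubling_cover_iter[OF R] by blast
  define f where "f p = (SOME c. c \<in> C \<and> p \<in> cball c (R/2^k))" for p
  have f: "f p \<in> C \<and> p \<in> cball (f p) (R/2^k)" if "p \<in> P" for p
    unfolding f_def by (rule someI_ex) (use that P C(3) in blast)
  have inj: "inj_on f P"
  proof (rule inj_onI)
    fix p p' assume pp: "p \<in> P" "p' \<in> P" "f p = f p'"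
    have "dist p p' \<le> dist p (f p) + dist (f p') p'" using pp(3) dist_triangle by metis
    also have "\<dots> \<le> 2*(R/2^k)" using f[OF pp(1)] f[OF pp(2)] by (simp add: dist_commute)
    finally have "\<not> dist p p' > \<rho>" using small by linarith
    then show "p = p'" using sep pp(1,2) by blast
  qed
  have img: "f ` P \<subseteq> C" using f by blast
  have "finite P" using finite_imageD[OF finite_subset[OF img C(1)] inj] .
  moreover have "card P \<le> N^k" using card_inj_on_le[OF inj img C(1)] C(2) by simp
  ultimately show ?thesis unfolding doubling_bound_def k_def by blast
qed

lemma separated_neighbours_card_le:
  fixes z :: 'a
  assumes d: "d > 0" and sep: "\<forall>z\<in>Z. \<forall>z'\<in>Z. z \<noteq> z' \<longrightarrow> dist z z' > d"
  shows "card {z'\<in>Z. z' \<noteq> z \<and> dist z z' \<le> 2 * d} \<le> doubling_bound N 2"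
proof -
  have "{z'\<in>Z. z' \<noteq> z \<and> dist z z' \<le> 2 * d} \<subseteq> cball z (2 * d)" by auto
  moreover have "2 * d > 0" using d by simp
  ultimately have "card {z'\<in>Z. z' \<noteq> z \<and> dist z z' \<le> 2 * d} \<le> doubling_bound N (2 * d / d)"
    using separated_subset_card_le[OF d] sep by blast
  then show ?thesis using d by simp
qed

lemma maximal_separated_subset:
  fixes y :: 'a
  assumes \<rho>: "\<rho> > 0" and R: "R > 0" and T: "T \<subseteq> cball y R"
  obtains Z where "Z \<subseteq> T" "finite Z" "\<forall>z\<in>Z. \<forall>z'\<in>Z. z \<noteq> z' \<longrightarrow> dist z z' > \<rho>"
    "\<forall>t\<in>T. \<exists>z\<in>Z. dist t z \<le> \<rho>"
proof -
  define P where "P Z \<longleftrightarrow> Z \<subseteq> T \<and> finite Z \<and> (\<forall>z\<in>Z. \<forall>z'\<in>Z. z \<noteq> z' \<longrightarrow> dist z z' > \<rho>)" for Z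
  have bound: "\<forall>Z. P Z \<longrightarrow> card Z < doubling_bound N (R/\<rho>) + 1"
  proof (intro allI impI)
    fix Z assume "P Z"
    then have "Z \<subseteq> cball y R" using T unfolding P_def by blast
    then show "card Z < doubling_bound N (R/\<rho>) + 1"
      using separated_subset_card_le[OF \<rho> R, of Z y] \<open>P Z\<close> unfolding P_def by simp
  qed
  have "P {}" by (simp add: P_def)
  then obtain Z where Z: "P Z" and Z_max: "\<forall>Z'. P Z' \<longrightarrow> card Z' \<le> card Z"
    using ex_has_greatest_nat[of P "{}" card, OF _ bound] by blast
  have "\<forall>t\<in>T. \<exists>z\<in>Z. dist t z \<le> \<rho>"
  proof (rule ccontr)
    assume "\<not> ?thesis"
    then obtain t where t: "t \<in> T" "\<forall>z\<in>Z. dist t z > \<rho>" by (auto simp: not_le)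
    then have "t \<notin> Z" using \<rho> by fastforce
    have "\<forall>z\<in>insert t Z. \<forall>z'\<in>insert t Z. z \<noteq> z' \<longrightarrow> dist z z' > \<rho>"
      using Z t(2) unfolding P_def by (simp add: dist_commute)
    then have "P (insert t Z)" using Z t(1) unfolding P_def by simp
    then have "card (insert t Z) \<le> card Z" using Z_max by blast
    with \<open>t \<notin> Z\<close> Z show False unfolding P_def by simp
  qed
  with Z that show ?thesis unfolding P_def by blast
qed

lemma bounded_null_balls_null:
  fixes y :: 'a
  assumes T: "T \<subseteq> cball y R" and \<epsilon>: "\<epsilon> > 0" and null: "\<And>t. t \<in> T \<Longrightarrow> \<mu> (ball t \<epsilon>) = 0"
  shows "\<mu> T = 0"
proof -
  have R: "max R 1 > 0" "T \<subseteq> cball y (max R 1)" using T by auto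
  have "\<epsilon> / 2 > 0" using \<epsilon> by simp
  then obtain Z where Z: "Z \<subseteq> T" "finite Z" "\<forall>z\<in>Z. \<forall>z'\<in>Z. z \<noteq> z' \<longrightarrow> dist z z' > \<epsilon> / 2"
      "\<forall>t\<in>T. \<exists>z\<in>Z. dist t z \<le> \<epsilon> / 2"
    by (rule maximal_separated_subset[OF _ R])
  have "T \<subseteq> (\<Union>z\<in>Z. ball z \<epsilon>)"
  proof
    fix t assume "t \<in> T"
    then obtain z where "z \<in> Z" "dist t z \<le> \<epsilon> / 2" using Z(4) by blast
    then have "t \<in> ball z \<epsilon>" using \<epsilon> by (simp add: dist_commute)
    with \<open>z \<in> Z\<close> show "t \<in> (\<Union>z\<in>Z. ball z \<epsilon>)" by blast
  qed
  then have "\<mu> T \<le> \<mu> (\<Union>z\<in>Z. ball z \<epsilon>)" by (rule \<mu>_mono)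
  also have "\<dots> \<le> (\<Sum>z\<in>Z. \<mu> (ball z \<epsilon>))" by (rule \<mu>_UN_le[OF Z(2)])
  also have "\<dots> = 0" using Z(1) null by (intro sum.neutral) blast
  finally show ?thesis by simp
qed

lemma measure_outside_support:
  assumes A: "A \<subseteq> cball y R"
  shows "\<mu> (A - spt \<mu>) = 0"
proof -
  define T where "T m = {t\<in>A. \<mu> (ball t (1/Suc m)) = 0}" for m
  have "A - spt \<mu> \<subseteq> (\<Union>m. T m)"
  proof
    fix t assume t: "t \<in> A - spt \<mu>"
    then obtain r where r: "r > 0" "\<not> \<mu> (ball t r) > 0" unfolding spt_def by auto
    obtain m where "inverse (real (Suc m)) < r" using reals_Archimedean[OF r(1)] by blast
    then have "ball t (1/Suc m) \<subseteq> ball t r" by (intro subset_ball) (simp add: divide_inverse)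
    then have "\<mu> (ball t (1/Suc m)) \<le> \<mu> (ball t r)" by (rule \<mu>_mono)
    with r(2) have "\<mu> (ball t (1/Suc m)) = 0" by (simp add: not_less)
    then show "t \<in> (\<Union>m. T m)" using t unfolding T_def by blast
  qed
  then have "\<mu> (A - spt \<mu>) \<le> \<mu> (\<Union>m. T m)" by (rule \<mu>_mono)
  also have "\<dots> \<le> (\<Sum>m. \<mu> (T m))" by (rule \<mu>_countably_subadditive)
  also have "\<dots> = 0"
  proof -
    have "\<mu> (T m) = 0" for m
    proof (rule bounded_null_balls_null)
      show "T m \<subseteq> cball y R" using A unfolding T_def by blast
      show "\<mu> (ball t (1 / Suc m)) = 0" if "t \<in> T m" for t using that unfolding T_def by blast
    qed simp
    then show ?thesis by simp
  qed
  finally show ?thesis by simp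
qed

end

section \<open>Packing sums\<close>

definition packing_centre :: "real \<Rightarrow> 'a::metric_space set \<Rightarrow> 'a set \<Rightarrow> 'a" where
  "packing_centre d S B = (SOME c. c \<in> S \<and> B = cball c d)"

lemma packing_centre:
  assumes "delta_packing d S \<B>" "B \<in> \<B>"
  shows "packing_centre d S B \<in> S" "cball (packing_centre d S B) d = B"
proof -
  have "\<exists>c. c \<in> S \<and> B = cball c d" using assms unfolding delta_packing_def by blast
  then have "packing_centre d S B \<in> S \<and> B = cball (packing_centre d S B) d"
    unfolding packing_centre_def by (rule someI_ex)
  then show "packing_centre d S B \<in> S" "cball (packing_centre d S B) d = B" by simp_all
qed

lemma packing_centres_far:
  assumes P: "delta_packing d S \<B>" and d: "d > 0" and B: "B \<in> \<B>" "B' \<in> \<B>" "B \<noteq> B'"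
  shows "dist (packing_centre d S B) (packing_centre d S B') > d"
proof (rule ccontr)
  let ?c = "packing_centre d S B" and ?c' = "packing_centre d S B'"
  assume "\<not> ?thesis"
  then have "?c' \<in> cball ?c d" by (simp add: not_less)
  then have "?c' \<in> B" using packing_centre(2)[OF P B(1)] by simp
  moreover have "?c' \<in> cball ?c' d" using d by simp
  then have "?c' \<in> B'" using packing_centre(2)[OF P B(2)] by simp
  moreover have "B \<inter> B' = {}" using P B unfolding delta_packing_def by blast
  ultimately show False by blast
qed

lemma inj_on_packing_centre:
  assumes "delta_packing d S \<B>"
  shows "inj_on (packing_centre d S) \<B>"
proof (rule inj_onI)
  fix B B' assume "B \<in> \<B>" "B' \<in> \<B>" "packing_centre d S B = packing_centre d S B'"
  then show "B = B'" using packing_centre(2)[OF assms] by metis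
qed

lemma infsum_mpow_finite:
  "finite F \<Longrightarrow> (\<Sum>\<^sub>\<infinity>B\<in>F. mpow \<mu> q B) = ennreal (\<Sum>B\<in>F. enn2real (\<mu> B) powr q)"
  by (simp add: mpow_def sum_ennreal)

context doubling_measure
begin

lemma packing_meeting_card_le:
  fixes y :: 'a
  assumes P: "delta_packing d S \<B>" and d: "d > 0" and Y: "Y \<subseteq> cball y R" and R: "R \<ge> 0"
  shows "finite {B\<in>\<B>. B \<inter> Y \<noteq> {}} \<and> card {B\<in>\<B>. B \<inter> Y \<noteq> {}} \<le> doubling_bound N ((R + d)/d)"
proof -
  define CC where "CC = {B\<in>\<B>. B \<inter> Y \<noteq> {}}"
  let ?c = "packing_centre d S"
  have "?c ` CC \<subseteq> cball y (R + d)"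
  proof
    fix p assume "p \<in> ?c ` CC"
    then obtain B w where B: "B \<in> \<B>" "p = ?c B" "w \<in> B" "w \<in> Y" unfolding CC_def by blast
    then have "dist p w \<le> d" using packing_centre(2)[OF P B(1)] by auto
    moreover have "dist y w \<le> R" using Y B(4) by auto
    ultimately show "p \<in> cball y (R + d)" using dist_triangle[of y p w] by (simp add: dist_commute)
  qed
  moreover have "\<forall>p\<in>?c ` CC. \<forall>p'\<in>?c ` CC. p \<noteq> p' \<longrightarrow> dist p p' > d"
    using packing_centres_far[OF P d] unfolding CC_def by blast
  moreover have "R + d > 0" using R d by linarith
  ultimately have fc: "finite (?c ` CC) \<and> card (?c ` CC) \<le> doubling_bound N ((R + d)/d)"
    by (intro separated_subset_card_le[OF d])
  have inj: "inj_on ?c CC" by (rule inj_on_subset[OF inj_on_packing_centre[OF P]]) (auto simp: CC_def)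
  have "finite CC" using finite_imageD[OF conjunct1[OF fc] inj] .
  moreover have "card CC \<le> doubling_bound N ((R + d)/d)" using fc card_image[OF inj] by simp
  ultimately show ?thesis unfolding CC_def by blast
qed

lemma packing_card_le:
  fixes x :: 'a
  assumes P: "delta_packing d (cball x r \<inter> T) \<B>" and d: "d > 0" and r: "r \<ge> 0"
  shows "finite \<B> \<and> card \<B> \<le> doubling_bound N ((r + d)/d)"
proof -
  have "B \<inter> cball x r \<noteq> {}" if "B \<in> \<B>" for B
  proof -
    let ?c = "packing_centre d (cball x r \<inter> T) B"
    have "?c \<in> cball ?c d" using d by simp
    then have "?c \<in> B \<inter> cball x r" using packing_centre[OF P that] by simp
    then show ?thesis by blast
  qed
  then have "{B\<in>\<B>. B \<inter> cball x r \<noteq> {}} = \<B>" by blast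
  with packing_meeting_card_le[OF P d subset_refl[of "cball x r"] r] show ?thesis by simp
qed

end

locale lq_spectrum = doubling_measure +
  fixes q :: real
  assumes q_nonneg: "q \<ge> 0"
begin

definition packing_sum :: "'a \<Rightarrow> real \<Rightarrow> real \<Rightarrow> real" where
  "packing_sum x r d = enn2real (S_q \<mu> q (cball x r) d)"

lemma S_q_le:
  fixes x :: 'a
  assumes d: "d > 0" and r: "r \<ge> 0"
    and bound: "\<And>\<B>. delta_packing d (cball x r \<inter> spt \<mu>) \<B> \<Longrightarrow> finite \<B> \<Longrightarrow>
      (\<Sum>B\<in>\<B>. enn2real (\<mu> B) powr q) \<le> M"
  shows "S_q \<mu> q (cball x r) d \<le> ennreal M"
  unfolding S_q_def
proof (rule SUP_least)
  fix \<B> assume "\<B> \<in> {\<B>. delta_packing d (cball x r \<inter> spt \<mu>) \<B>}"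
  then have P: "delta_packing d (cball x r \<inter> spt \<mu>) \<B>" by simp
  then have fin: "finite \<B>" using packing_card_le[OF _ d r] by blast
  show "(\<Sum>\<^sub>\<infinity>B\<in>\<B>. mpow \<mu> q B) \<le> ennreal M"
    unfolding infsum_mpow_finite[OF fin] by (rule ennreal_leI) (rule bound[OF P fin])
qed

lemma sum_le_S_q:
  fixes x :: 'a
  assumes P: "delta_packing d (cball x r \<inter> spt \<mu>) \<B>" and fin: "finite \<B>"
  shows "ennreal (\<Sum>B\<in>\<B>. enn2real (\<mu> B) powr q) \<le> S_q \<mu> q (cball x r) d"
proof -
  have "(\<Sum>\<^sub>\<infinity>B\<in>\<B>. mpow \<mu> q B) \<le> S_q \<mu> q (cball x r) d"
    unfolding S_q_def by (rule SUP_upper) (simp add: P)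
  then show ?thesis using infsum_mpow_finite[OF fin] by simp
qed

lemma S_q_finite:
  fixes x :: 'a
  assumes d: "d > 0" and r: "r \<ge> 0"
  shows "S_q \<mu> q (cball x r) d < top"
proof -
  define b where "b = enn2real (\<mu> (cball x (r + d))) powr q"
  have "S_q \<mu> q (cball x r) d \<le> ennreal (real (doubling_bound N ((r + d)/d)) * b)"
  proof (rule S_q_le[OF d r])
    fix \<B> assume P: "delta_packing d (cball x r \<inter> spt \<mu>) \<B>" and fin: "finite \<B>"
    have "enn2real (\<mu> B) powr q \<le> b" if B: "B \<in> \<B>" for B
    proof -
      let ?c = "packing_centre d (cball x r \<inter> spt \<mu>) B"
      have "B \<subseteq> cball x (r + d)"
      proof
        fix w assume "w \<in> B"
        then have "dist ?c w \<le> d" "dist x ?c \<le> r" using packing_centre[OF P B] by auto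
        then show "w \<in> cball x (r + d)" using dist_triangle[of x w ?c] by simp
      qed
      then have "enn2real (\<mu> B) \<le> enn2real (\<mu> (cball x (r + d)))"
        by (intro enn2real_mono \<mu>_mono \<mu>_cball_finite[OF subset_refl])
      then show ?thesis unfolding b_def by (rule powr_mono2[OF q_nonneg enn2real_nonneg])
    qed
    then have "(\<Sum>B\<in>\<B>. enn2real (\<mu> B) powr q) \<le> real (card \<B>) * b"
      using sum_bounded_above[of \<B> "\<lambda>B. enn2real (\<mu> B) powr q" b] by simp
    also have "\<dots> \<le> real (doubling_bound N ((r + d)/d)) * b"
      using packing_card_le[OF P d r] unfolding b_def by (intro mult_right_mono) simp_all
    finally show "(\<Sum>B\<in>\<B>. enn2real (\<mu> B) powr q) \<le> real (doubling_bound N ((r + d)/d)) * b" .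
  qed
  also have "\<dots> < top" by simp
  finally show ?thesis .
qed

lemma sum_le_packing_sum:
  fixes x :: 'a
  assumes P: "delta_packing d (cball x r \<inter> spt \<mu>) \<B>" and d: "d > 0" and r: "r \<ge> 0"
  shows "(\<Sum>B\<in>\<B>. enn2real (\<mu> B) powr q) \<le> packing_sum x r d"
proof -
  have fin: "finite \<B>" using packing_card_le[OF P d r] by blast
  have "enn2real (ennreal (\<Sum>B\<in>\<B>. enn2real (\<mu> B) powr q)) \<le> packing_sum x r d"
    unfolding packing_sum_def using sum_le_S_q[OF P fin] S_q_finite[OF d r, where x=x] by (rule enn2real_mono)
  then show ?thesis by (simp add: sum_nonneg)
qed

lemma packing_sum_le:
  fixes x :: 'a
  assumes "d > 0" "r \<ge> 0" "M \<ge> 0"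
    and "\<And>\<B>. delta_packing d (cball x r \<inter> spt \<mu>) \<B> \<Longrightarrow> finite \<B> \<Longrightarrow>
      (\<Sum>B\<in>\<B>. enn2real (\<mu> B) powr q) \<le> M"
  shows "packing_sum x r d \<le> M"
  unfolding packing_sum_def using assms by (intro enn2real_leI S_q_le)

lemma measure_ball_pos:
  fixes x :: 'a
  assumes "x \<in> spt \<mu>" "r > 0"
  shows "enn2real (\<mu> (cball x r)) > 0"
proof -
  have "0 < \<mu> (ball x r)" using assms unfolding spt_def by blast
  also have "\<dots> \<le> \<mu> (cball x r)" by (rule \<mu>_mono[OF ball_subset_cball])
  finally show ?thesis
    using \<mu>_cball_finite[OF subset_refl] by (simp add: enn2real_positive_iff)
qed

lemma packing_sum_pos:
  fixes x :: 'a
  assumes x: "x \<in> spt \<mu>" and d: "d > 0" and r: "r \<ge> 0"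
  shows "packing_sum x r d > 0"
proof -
  have P: "delta_packing d (cball x r \<inter> spt \<mu>) {cball x d}"
    unfolding delta_packing_def using x r by auto
  have "0 < enn2real (\<mu> (cball x d)) powr q" using measure_ball_pos[OF x d] by simp
  also have "\<dots> \<le> packing_sum x r d" using sum_le_packing_sum[OF P d r] by simp
  finally show ?thesis .
qed

lemma packing_sum_mono:
  fixes x :: 'a
  assumes d: "d > 0" and r: "0 \<le> r" "r \<le> r'"
  shows "packing_sum x r d \<le> packing_sum x r' d"
proof -
  have sub: "cball x r \<inter> spt \<mu> \<subseteq> cball x r' \<inter> spt \<mu>" using subset_cball[OF r(2)] by blast
  have "delta_packing d (cball x r' \<inter> spt \<mu>) \<B>" if "delta_packing d (cball x r \<inter> spt \<mu>) \<B>" for \<B>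
  proof -
    have "\<forall>B\<in>\<B>. \<exists>c\<in>cball x r' \<inter> spt \<mu>. B = cball c d"
      using that sub unfolding delta_packing_def by (meson subsetD)
    then show ?thesis using that unfolding delta_packing_def by (elim conjE) (intro conjI)
  qed
  then have "S_q \<mu> q (cball x r) d \<le> S_q \<mu> q (cball x r') d"
    unfolding S_q_def by (intro SUP_subset_mono) auto
  then show ?thesis
    unfolding packing_sum_def using S_q_finite[OF d, where x=x] r by (intro enn2real_mono) auto
qed

definition packing_exponent :: "'a \<Rightarrow> real \<Rightarrow> ereal" where
  "packing_exponent x r = Liminf (at_right 0) (\<lambda>d. ereal (ln (packing_sum x r d) / ln d))"

lemma tau_q_eq_Lim_packing_exponent:
  fixes x :: 'a
  shows "tau_q \<mu> q x = Lim (at_right 0) (packing_exponent x)"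
  unfolding tau_q_def packing_exponent_def packing_sum_def ..

lemma packing_exponent_antimono:
  fixes x :: 'a
  assumes x: "x \<in> spt \<mu>" and r: "0 < r" "r \<le> r'"
  shows "packing_exponent x r' \<le> packing_exponent x r"
  unfolding packing_exponent_def
proof (rule Liminf_mono)
  show "\<forall>\<^sub>F d in at_right 0. ereal (ln (packing_sum x r' d) / ln d) \<le> ereal (ln (packing_sum x r d) / ln d)"
    using eventually_at_right_real[OF zero_less_one]
  proof (rule eventually_mono)
    fix d :: real assume d: "d \<in> {0<..<1}"
    have "0 < packing_sum x r d" using d r by (intro packing_sum_pos[OF x]) auto
    moreover have "packing_sum x r d \<le> packing_sum x r' d" using d r by (intro packing_sum_mono) auto
    ultimately have "ln (packing_sum x r d) \<le> ln (packing_sum x r' d)" by simp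
    then show "ereal (ln (packing_sum x r' d) / ln d) \<le> ereal (ln (packing_sum x r d) / ln d)"
      using d by (simp add: divide_right_mono_neg)
  qed
qed

lemma far_separated_sum_le_packing_sum:
  fixes x :: 'a
  assumes d: "d > 0" and Z: "finite Z" "Z \<subseteq> spt \<mu> \<inter> cball x R" and R: "R \<ge> 0"
    and far: "\<forall>z\<in>Z. \<forall>z'\<in>Z. z \<noteq> z' \<longrightarrow> dist z z' > 2 * d"
  shows "(\<Sum>z\<in>Z. enn2real (\<mu> (cball z d)) powr q) \<le> packing_sum x R d"
proof -
  have disjoint: "cball z d \<inter> cball z' d = {}" if "z \<in> Z" "z' \<in> Z" "z \<noteq> z'" for z z'
  proof (rule ccontr)
    assume "cball z d \<inter> cball z' d \<noteq> {}"
    then obtain w where "dist z w \<le> d" "dist z' w \<le> d" by auto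
    then have "dist z z' \<le> 2 * d" using dist_triangle[of z z' w] by (simp add: dist_commute)
    with far that show False by fastforce
  qed
  have inj: "inj_on (\<lambda>z. cball z d) Z"
  proof (rule inj_onI)
    fix z z' assume "z \<in> Z" "z' \<in> Z" "cball z d = cball z' d"
    then show "z = z'" using disjoint[of z z'] d by (metis centre_in_cball inf.idem less_le empty_iff)
  qed
  have "delta_packing d (cball x R \<inter> spt \<mu>) ((\<lambda>z. cball z d) ` Z)"
    unfolding delta_packing_def
  proof (intro conjI ballI impI)
    show "countable ((\<lambda>z. cball z d) ` Z)" using Z(1) by (simp add: countable_finite)
  next
    fix B B' assume "B \<in> (\<lambda>z. cball z d) ` Z" "B' \<in> (\<lambda>z. cball z d) ` Z" "B \<noteq> B'"
    then show "B \<inter> B' = {}" using disjoint by blast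
  next
    fix B assume "B \<in> (\<lambda>z. cball z d) ` Z"
    then show "\<exists>c\<in>cball x R \<inter> spt \<mu>. B = cball c d" using Z(2) by blast
  qed
  from sum_le_packing_sum[OF this d R] show ?thesis by (simp add: sum.reindex[OF inj])
qed

text \<open>Colouring the graph "closer than \<open>2d\<close>" splits a \<open>d\<close>-separated set into boundedly many
  \<open>2d\<close>-separated classes; each class spans a packing by balls of radius \<open>d\<close>.\<close>
lemma separated_sum_le_packing_sum:
  fixes x :: 'a
  assumes d: "d > 0" and Z: "finite Z" "Z \<subseteq> spt \<mu> \<inter> cball x R" and R: "R \<ge> 0"
    and sep: "\<forall>z\<in>Z. \<forall>z'\<in>Z. z \<noteq> z' \<longrightarrow> dist z z' > d"
  shows "(\<Sum>z\<in>Z. enn2real (\<mu> (cball z d)) powr q) \<le> (doubling_bound N 2 + 1) * packing_sum x R d"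
proof -
  define K where "K = doubling_bound N 2 + 1"
  define adj where "adj z z' \<longleftrightarrow> dist z z' \<le> 2 * d" for z z' :: 'a
  have deg: "card {z'\<in>Z. z' \<noteq> z \<and> adj z z'} < K" for z
    using separated_neighbours_card_le[OF d sep, of z] unfolding K_def adj_def by simp
  have sym: "adj z z' \<Longrightarrow> adj z' z" for z z' unfolding adj_def by (simp add: dist_commute)
  from bounded_degree_colouring[OF Z(1) sym deg] obtain col where
    "(\<forall>z\<in>Z. col z < K) \<and> (\<forall>z\<in>Z. \<forall>z'\<in>Z. z \<noteq> z' \<and> adj z z' \<longrightarrow> col z \<noteq> col z')" ..
  then have col: "\<forall>z\<in>Z. col z < K"
    and proper: "\<forall>z\<in>Z. \<forall>z'\<in>Z. z \<noteq> z' \<and> adj z z' \<longrightarrow> col z \<noteq> col z'"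
    by blast+
  define f where "f z = enn2real (\<mu> (cball z d)) powr q" for z
  have "(\<Sum>k<K. \<Sum>z\<in>{z\<in>Z. col z = k}. f z) = (\<Sum>z\<in>Z. \<Sum>k\<in>{k\<in>{..<K}. col z = k}. f z)"
    by (rule sum.swap_restrict) (simp_all add: Z(1))
  also have "\<dots> = (\<Sum>z\<in>Z. f z)"
  proof (rule sum.cong[OF refl])
    fix z assume "z \<in> Z"
    then have "{k\<in>{..<K}. col z = k} = {col z}" using col by auto
    then show "(\<Sum>k\<in>{k\<in>{..<K}. col z = k}. f z) = f z" by simp
  qed
  finally have "(\<Sum>z\<in>Z. f z) = (\<Sum>k<K. \<Sum>z\<in>{z\<in>Z. col z = k}. f z)" ..
  also have "\<dots> \<le> (\<Sum>k<K. packing_sum x R d)"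
  proof (rule sum_mono)
    fix k
    have "\<forall>z\<in>{z\<in>Z. col z = k}. \<forall>z'\<in>{z\<in>Z. col z = k}. z \<noteq> z' \<longrightarrow> dist z z' > 2 * d"
      using proper unfolding adj_def by fastforce
    then show "(\<Sum>z\<in>{z\<in>Z. col z = k}. f z) \<le> packing_sum x R d"
      unfolding f_def using Z by (intro far_separated_sum_le_packing_sum[OF d _ _ R]) auto
  qed
  finally show ?thesis unfolding f_def K_def by simp
qed

end

section \<open>Cell systems\<close>

locale cell_system = lq_spectrum +
  fixes \<delta> \<gamma> :: "nat \<Rightarrow> real" and Q :: "nat \<Rightarrow> 'a set set" and E :: "'a set"
  assumes \<delta>_pos: "\<And>n. \<delta> n > 0" and \<gamma>_pos: "\<And>n. \<gamma> n > 0"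
    and Q_disjoint: "\<And>n. \<forall>A\<in>Q n. \<forall>B\<in>Q n. A \<noteq> B \<longrightarrow> A \<inter> B = {}"
    and Q_inner: "\<And>n A. A \<in> Q n \<Longrightarrow> \<exists>c. cball c (\<delta> n) \<subseteq> A"
    and Q_outer: "\<And>n A. A \<in> Q n \<Longrightarrow> \<exists>c. A \<subseteq> cball c (\<gamma> n)"
    and E_eq: "E = (\<Inter>n. \<Union>(Q n))"
    and null_outside_E: "\<mu> (UNIV - E) = 0"
begin

definition inner_centre :: "nat \<Rightarrow> 'a set \<Rightarrow> 'a" where
  "inner_centre n A = (SOME c. cball c (\<delta> n) \<subseteq> A)"

definition outer_centre :: "nat \<Rightarrow> 'a set \<Rightarrow> 'a" where
  "outer_centre n A = (SOME c. A \<subseteq> cball c (\<gamma> n))"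

lemma inner_ball_subset: "A \<in> Q n \<Longrightarrow> cball (inner_centre n A) (\<delta> n) \<subseteq> A"
  unfolding inner_centre_def by (rule someI_ex) (rule Q_inner)

lemma subset_outer_ball: "A \<in> Q n \<Longrightarrow> A \<subseteq> cball (outer_centre n A) (\<gamma> n)"
  unfolding outer_centre_def by (rule someI_ex) (rule Q_outer)

lemma inner_centre_mem: "A \<in> Q n \<Longrightarrow> inner_centre n A \<in> A"
  using inner_ball_subset \<delta>_pos[of n] by (meson centre_in_cball less_imp_le subsetD)

lemma inner_centres_far:
  assumes A: "A \<in> Q n" "A' \<in> Q n" "A \<noteq> A'"
  shows "dist (inner_centre n A) (inner_centre n A') > \<delta> n"
proof (rule ccontr)
  assume "\<not> ?thesis"
  then have "inner_centre n A' \<in> A" using inner_ball_subset[OF A(1)] by (auto simp: not_less)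
  moreover have "inner_centre n A' \<in> A'" by (rule inner_centre_mem[OF A(2)])
  moreover have "A \<inter> A' = {}" using Q_disjoint[of n] A by blast
  ultimately show False by blast
qed

lemma inj_on_inner_centre: "inj_on (inner_centre n) (Q n)"
proof (rule inj_onI)
  fix A A' assume A: "A \<in> Q n" "A' \<in> Q n" "inner_centre n A = inner_centre n A'"
  show "A = A'"
  proof (rule ccontr)
    assume "A \<noteq> A'"
    with inner_centres_far[OF A(1,2)] A(3) \<delta>_pos[of n] show False by simp
  qed
qed

lemma cell_subset_cball:
  fixes y :: 'a
  assumes A: "A \<in> Q n" "A \<inter> Y \<noteq> {}" and Y: "Y \<subseteq> cball y R"
  shows "A \<subseteq> cball y (R + 2 * \<gamma> n)"
proof
  fix a assume a: "a \<in> A"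
  obtain w where w: "w \<in> A" "w \<in> Y" using A(2) by blast
  then have "dist y w \<le> R" using Y by auto
  let ?o = "outer_centre n A"
  have "dist ?o w \<le> \<gamma> n" "dist ?o a \<le> \<gamma> n" using subset_outer_ball[OF A(1)] w(1) a by auto
  then have "dist w a \<le> 2 * \<gamma> n" using dist_triangle[of w a ?o] by (simp add: dist_commute)
  then show "a \<in> cball y (R + 2 * \<gamma> n)" using \<open>dist y w \<le> R\<close> dist_triangle[of y a w] by simp
qed

lemma cells_meeting_card_le:
  fixes y :: 'a
  assumes Y: "Y \<subseteq> cball y R" and R: "R \<ge> 0"
  shows "finite {A\<in>Q n. A \<inter> Y \<noteq> {}} \<and> card {A\<in>Q n. A \<inter> Y \<noteq> {}} \<le> doubling_bound N ((R + 2 * \<gamma> n)/\<delta> n)"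
proof -
  define CC where "CC = {A\<in>Q n. A \<inter> Y \<noteq> {}}"
  have "inner_centre n ` CC \<subseteq> cball y (R + 2 * \<gamma> n)"
    using cell_subset_cball[OF _ _ Y] inner_centre_mem unfolding CC_def by blast
  moreover have "\<forall>p\<in>inner_centre n ` CC. \<forall>p'\<in>inner_centre n ` CC. p \<noteq> p' \<longrightarrow> dist p p' > \<delta> n"
    using inner_centres_far unfolding CC_def by blast
  moreover have "R + 2 * \<gamma> n > 0" using R \<gamma>_pos[of n] by linarith
  ultimately have fc: "finite (inner_centre n ` CC) \<and>
      card (inner_centre n ` CC) \<le> doubling_bound N ((R + 2 * \<gamma> n)/\<delta> n)"
    by (intro separated_subset_card_le[OF \<delta>_pos])
  have inj: "inj_on (inner_centre n) CC"
    by (rule inj_on_subset[OF inj_on_inner_centre]) (auto simp: CC_def)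
  have "finite CC" using finite_imageD[OF conjunct1[OF fc] inj] .
  moreover have "card CC \<le> doubling_bound N ((R + 2 * \<gamma> n)/\<delta> n)" using fc card_image[OF inj] by simp
  ultimately show ?thesis unfolding CC_def by blast
qed

lemma separated_balls_meeting_cell_card_le:
  assumes A: "A \<in> Q n" and d: "d > 0" and sep: "\<forall>z\<in>Z. \<forall>z'\<in>Z. z \<noteq> z' \<longrightarrow> dist z z' > d"
  shows "card {z\<in>Z. cball z d \<inter> A \<noteq> {}} \<le> doubling_bound N ((\<gamma> n + d)/d)"
proof -
  let ?o = "outer_centre n A"
  have "{z\<in>Z. cball z d \<inter> A \<noteq> {}} \<subseteq> cball ?o (\<gamma> n + d)"
  proof
    fix z assume "z \<in> {z\<in>Z. cball z d \<inter> A \<noteq> {}}"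
    then obtain w where "dist z w \<le> d" "w \<in> A" by auto
    moreover from \<open>w \<in> A\<close> have "dist ?o w \<le> \<gamma> n" using subset_outer_ball[OF A] by auto
    ultimately show "z \<in> cball ?o (\<gamma> n + d)" using dist_triangle[of ?o z w] by (simp add: dist_commute)
  qed
  then show ?thesis using separated_subset_card_le[OF d, of "\<gamma> n + d"] sep d \<gamma>_pos[of n] by auto
qed

lemma measure_le_sum_cells_meeting:
  fixes y :: 'a
  assumes Y: "Y \<subseteq> cball y R"
  shows "\<mu> Y \<le> (\<Sum>A\<in>{A\<in>Q n. A \<inter> Y \<noteq> {}}. \<mu> A)"
proof -
  let ?CC = "{A\<in>Q n. A \<inter> Y \<noteq> {}}"
  have "Y \<subseteq> cball y (max R 0)" using Y subset_cball[of R "max R 0" y] by simp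
  then have fin: "finite ?CC" using cells_meeting_card_le by simp
  have "Y \<subseteq> (UNIV - E) \<union> (\<Union>A\<in>?CC. A)" unfolding E_eq by blast
  then have "\<mu> Y \<le> \<mu> ((UNIV - E) \<union> (\<Union>A\<in>?CC. A))" by (rule \<mu>_mono)
  also have "\<dots> \<le> \<mu> (UNIV - E) + \<mu> (\<Union>A\<in>?CC. A)" by (rule \<mu>_Un_le)
  also have "\<dots> \<le> (\<Sum>A\<in>?CC. \<mu> A)" using \<mu>_UN_le[OF fin, of id] null_outside_E by simp
  finally show ?thesis .
qed

lemma cell_measure_finite: "A \<in> Q n \<Longrightarrow> \<mu> A < top"
  by (rule \<mu>_cball_finite[OF subset_outer_ball])

definition cell_sum :: "'a \<Rightarrow> nat \<Rightarrow> real \<Rightarrow> real" where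
  "cell_sum x n r = (\<Sum>A\<in>{A\<in>Q n. A \<inter> cball x r \<noteq> {}}. enn2real (\<mu> A) powr q)"

lemma cell_sum_nonneg: "cell_sum x n r \<ge> 0"
  unfolding cell_sum_def by (rule sum_nonneg) simp

lemma infsum_cells_eq_cell_sum:
  fixes x :: 'a
  assumes "r \<ge> 0"
  shows "enn2real (\<Sum>\<^sub>\<infinity>A\<in>{A\<in>Q n. A \<inter> cball x r \<noteq> {}}. mpow \<mu> q A) = cell_sum x n r"
proof -
  have "finite {A\<in>Q n. A \<inter> cball x r \<noteq> {}}" using cells_meeting_card_le[OF subset_refl assms] by blast
  then show ?thesis using cell_sum_nonneg[of x n r] by (simp only: infsum_mpow_finite cell_sum_def) simp
qed

lemma cell_sum_pos:
  fixes x :: 'a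
  assumes x: "x \<in> spt \<mu>" and r: "r > 0"
  shows "cell_sum x n r > 0"
proof -
  let ?CC = "{A\<in>Q n. A \<inter> cball x r \<noteq> {}}"
  have fin: "finite ?CC" using cells_meeting_card_le[OF subset_refl] r by simp
  have "0 < \<mu> (cball x r)" using measure_ball_pos[OF x r] by (simp add: enn2real_positive_iff)
  also have "\<dots> \<le> (\<Sum>A\<in>?CC. \<mu> A)" by (rule measure_le_sum_cells_meeting[OF subset_refl])
  finally have "(\<Sum>A\<in>?CC. \<mu> A) \<noteq> 0" by simp
  then have "\<exists>A\<in>?CC. \<mu> A > 0" using sum.neutral[of ?CC \<mu>] by (meson not_gr_zero)
  then obtain A where A: "A \<in> ?CC" "\<mu> A > 0" by blast
  then have "enn2real (\<mu> A) > 0" using cell_measure_finite[of A n] by (simp add: enn2real_positive_iff)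
  then have "enn2real (\<mu> A) powr q > 0" by simp
  then show ?thesis unfolding cell_sum_def by (intro sum_pos2[OF fin A(1)]) simp_all
qed

lemma packing_sum_le_cell_sum:
  fixes x :: 'a and K :: real
  assumes d: "d > 0" "d \<le> r" and K: "K \<ge> 1"
    and K_cells: "real (doubling_bound N ((d + 2 * \<gamma> m)/\<delta> m)) \<le> K"
    and K_balls: "real (doubling_bound N ((\<gamma> m + d)/d)) \<le> K"
  shows "packing_sum x r d \<le> K powr (q+1) * cell_sum x m (2 * r)"
proof (rule packing_sum_le)
  let ?J = "{A\<in>Q m. A \<inter> cball x (2 * r) \<noteq> {}}"
  have J: "finite ?J" using cells_meeting_card_le[OF subset_refl] d by simp
  fix \<B> assume P: "delta_packing d (cball x r \<inter> spt \<mu>) \<B>" and fin: "finite \<B>"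
  show "(\<Sum>B\<in>\<B>. enn2real (\<mu> B) powr q) \<le> K powr (q+1) * cell_sum x m (2 * r)"
    unfolding cell_sum_def
  proof (rule sum_powr_le_bounded_incidence[OF fin J K q_nonneg, where R = "\<lambda>B A. A \<inter> B \<noteq> {}"])
    fix B assume B: "B \<in> \<B>"
    let ?c = "packing_centre d (cball x r \<inter> spt \<mu>) B"
    have B_ball: "B \<subseteq> cball ?c d" using packing_centre(2)[OF P B] by simp
    have "B \<subseteq> cball x (2 * r)"
    proof
      fix w assume "w \<in> B"
      then have "dist ?c w \<le> d" "dist x ?c \<le> r" using packing_centre[OF P B] by auto
      then show "w \<in> cball x (2 * r)" using dist_triangle[of x w ?c] d by simp
    qed
    then have eq: "{A\<in>?J. A \<inter> B \<noteq> {}} = {A\<in>Q m. A \<inter> B \<noteq> {}}" by blast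
    have cm: "finite {A\<in>Q m. A \<inter> B \<noteq> {}} \<and> card {A\<in>Q m. A \<inter> B \<noteq> {}} \<le> doubling_bound N ((d + 2 * \<gamma> m)/\<delta> m)"
      using cells_meeting_card_le[OF B_ball] d by simp
    have "enn2real (\<mu> B) \<le> (\<Sum>A\<in>{A\<in>Q m. A \<inter> B \<noteq> {}}. enn2real (\<mu> A))"
      using cm cell_measure_finite measure_le_sum_cells_meeting[OF B_ball] by (intro enn2real_le_sum) auto
    then show "enn2real (\<mu> B) \<le> (\<Sum>A\<in>{A\<in>?J. A \<inter> B \<noteq> {}}. enn2real (\<mu> A))" using eq by simp
    show "real (card {A\<in>?J. A \<inter> B \<noteq> {}}) \<le> K" using eq cm K_cells by simp
  next
    fix A assume "A \<in> ?J"
    then have "A \<subseteq> cball (outer_centre m A) (\<gamma> m)" by (simp add: subset_outer_ball)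
    then have "card {B\<in>\<B>. B \<inter> A \<noteq> {}} \<le> doubling_bound N ((\<gamma> m + d)/d)"
      using packing_meeting_card_le[OF P d(1)] \<gamma>_pos[of m] by (simp add: less_imp_le)
    moreover have "{B\<in>\<B>. A \<inter> B \<noteq> {}} = {B\<in>\<B>. B \<inter> A \<noteq> {}}" by blast
    ultimately show "real (card {B\<in>\<B>. A \<inter> B \<noteq> {}}) \<le> K" using K_balls by simp
  qed simp_all
qed (use d cell_sum_nonneg in auto)

lemma cell_measure_le_net_sum:
  fixes x :: 'a
  assumes A: "A \<in> Q n" "A \<subseteq> cball x R"
    and Z: "finite Z" "\<forall>t\<in>spt \<mu> \<inter> cball x R. \<exists>z\<in>Z. dist t z \<le> d"
  shows "enn2real (\<mu> A) \<le> (\<Sum>z\<in>{z\<in>Z. cball z d \<inter> A \<noteq> {}}. enn2real (\<mu> (cball z d)))"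
proof -
  let ?ZA = "{z\<in>Z. cball z d \<inter> A \<noteq> {}}"
  have "A \<subseteq> (A - spt \<mu>) \<union> (\<Union>z\<in>?ZA. cball z d)"
  proof
    fix a assume a: "a \<in> A"
    show "a \<in> (A - spt \<mu>) \<union> (\<Union>z\<in>?ZA. cball z d)"
    proof (cases "a \<in> spt \<mu>")
      case True
      then obtain z where "z \<in> Z" "dist a z \<le> d" using Z(2) A(2) a by blast
      then have "a \<in> cball z d" by (simp add: dist_commute)
      with \<open>z \<in> Z\<close> a show ?thesis by blast
    qed (use a in blast)
  qed
  then have "\<mu> A \<le> \<mu> ((A - spt \<mu>) \<union> (\<Union>z\<in>?ZA. cball z d))" by (rule \<mu>_mono)
  also have "\<dots> \<le> \<mu> (A - spt \<mu>) + \<mu> (\<Union>z\<in>?ZA. cball z d)" by (rule \<mu>_Un_le)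
  also have "\<dots> \<le> (\<Sum>z\<in>?ZA. \<mu> (cball z d))"
    using measure_outside_support[OF A(2)] \<mu>_UN_le[of ?ZA] Z(1) by simp
  finally show ?thesis
    using Z(1) \<mu>_cball_finite[OF subset_refl] by (intro enn2real_le_sum) auto
qed

lemma cell_sum_le_packing_sum:
  fixes x :: 'a and K :: real
  assumes x: "x \<in> spt \<mu>" and r: "r > 0" "2 * \<gamma> n \<le> r" and K: "K \<ge> 1"
    and K_cells: "real (doubling_bound N ((\<delta> n + 2 * \<gamma> n)/\<delta> n)) \<le> K"
    and K_balls: "real (doubling_bound N ((\<gamma> n + \<delta> n)/\<delta> n)) \<le> K"
  shows "cell_sum x n r \<le> K powr (q+1) * ((doubling_bound N 2 + 1) * packing_sum x (2 * r) (\<delta> n))"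
proof -
  define d where "d = \<delta> n"
  have d: "d > 0" unfolding d_def by (rule \<delta>_pos)
  define R where "R = r + 2 * \<gamma> n"
  have R: "R > 0" "R \<le> 2 * r" unfolding R_def using r \<gamma>_pos[of n] by linarith+
  obtain Z where Z: "Z \<subseteq> spt \<mu> \<inter> cball x R" "finite Z"
    "\<forall>z\<in>Z. \<forall>z'\<in>Z. z \<noteq> z' \<longrightarrow> dist z z' > d" "\<forall>t\<in>spt \<mu> \<inter> cball x R. \<exists>z\<in>Z. dist t z \<le> d"
    by (rule maximal_separated_subset[OF d R(1) Int_lower2])
  let ?CC = "{A\<in>Q n. A \<inter> cball x r \<noteq> {}}"
  have CC: "finite ?CC" using cells_meeting_card_le[OF subset_refl] r by simp
  have "cell_sum x n r \<le> K powr (q+1) * (\<Sum>z\<in>Z. enn2real (\<mu> (cball z d)) powr q)"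
    unfolding cell_sum_def
  proof (rule sum_powr_le_bounded_incidence[OF CC Z(2) K q_nonneg, where R = "\<lambda>A z. cball z d \<inter> A \<noteq> {}"])
    fix A assume "A \<in> ?CC"
    then have A: "A \<in> Q n" "A \<inter> cball x r \<noteq> {}" by auto
    then have "A \<subseteq> cball x R" unfolding R_def using cell_subset_cball[OF _ _ subset_refl] by blast
    then show "enn2real (\<mu> A) \<le> (\<Sum>z\<in>{z\<in>Z. cball z d \<inter> A \<noteq> {}}. enn2real (\<mu> (cball z d)))"
      by (rule cell_measure_le_net_sum[OF A(1) _ Z(2,4)])
    have "card {z\<in>Z. cball z d \<inter> A \<noteq> {}} \<le> doubling_bound N ((\<gamma> n + d)/d)"
      by (rule separated_balls_meeting_cell_card_le[OF A(1) d Z(3)])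
    then show "real (card {z\<in>Z. cball z d \<inter> A \<noteq> {}}) \<le> K" using K_balls unfolding d_def by simp
  next
    fix z assume "z \<in> Z"
    have cm: "finite {A\<in>Q n. A \<inter> cball z d \<noteq> {}} \<and>
        card {A\<in>Q n. A \<inter> cball z d \<noteq> {}} \<le> doubling_bound N ((d + 2 * \<gamma> n)/\<delta> n)"
      using cells_meeting_card_le[OF subset_refl] d by simp
    have "{A\<in>?CC. cball z d \<inter> A \<noteq> {}} \<subseteq> {A\<in>Q n. A \<inter> cball z d \<noteq> {}}" by blast
    then have "card {A\<in>?CC. cball z d \<inter> A \<noteq> {}} \<le> card {A\<in>Q n. A \<inter> cball z d \<noteq> {}}"
      using cm by (intro card_mono) auto
    then show "real (card {A\<in>?CC. cball z d \<inter> A \<noteq> {}}) \<le> K" using cm K_cells unfolding d_def by simp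
  qed simp_all
  also have "\<dots> \<le> K powr (q+1) * ((doubling_bound N 2 + 1) * packing_sum x (2 * r) d)"
    using Z(1,2,3) R(2) r(1) d
    by (intro mult_left_mono separated_sum_le_packing_sum) (auto simp: subset_cball[THEN subsetD])
  finally show ?thesis unfolding d_def .
qed

end

section \<open>Comparison of the two exponents\<close>

locale regular_cell_system = cell_system +
  assumes \<delta>_dec: "decseq \<delta>" and \<gamma>_dec: "decseq \<gamma>" and \<delta>_le_\<gamma>: "\<And>n. \<delta> n \<le> \<gamma> n"
    and \<gamma>_lim: "\<gamma> \<longlonglongrightarrow> 0"
    and \<delta>_ratio: "(\<lambda>n. ln (\<delta> n) / ln (\<delta> (Suc n))) \<longlonglongrightarrow> 1"
    and \<gamma>\<delta>_ratio: "(\<lambda>n. ln (\<gamma> n) / ln (\<delta> n)) \<longlonglongrightarrow> 1"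
begin

lemma \<delta>_Suc_le: "\<delta> (Suc n) \<le> \<delta> n" and \<gamma>_Suc_le: "\<gamma> (Suc n) \<le> \<gamma> n"
  using \<delta>_dec \<gamma>_dec by (simp_all add: decseq_Suc_iff)

lemma \<delta>_lim: "\<delta> \<longlonglongrightarrow> 0"
proof (rule tendsto_sandwich[OF _ _ tendsto_const \<gamma>_lim])
  show "\<forall>\<^sub>F n in sequentially. 0 \<le> \<delta> n" using \<delta>_pos by (simp add: less_imp_le)
  show "\<forall>\<^sub>F n in sequentially. \<delta> n \<le> \<gamma> n" using \<delta>_le_\<gamma> by simp
qed

lemma \<delta>_at_right_0: "filterlim \<delta> (at_right 0) sequentially"
  by (rule tendsto_imp_filterlim_at_right[OF \<delta>_lim]) (simp add: \<delta>_pos)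

lemma eventually_\<delta>_less_1: "\<forall>\<^sub>F n in sequentially. \<delta> n < 1"
  using order_tendstoD(2)[OF \<delta>_lim, of 1] by simp

lemma ln_\<delta>_neg: "\<delta> n < 1 \<Longrightarrow> ln (\<delta> n) < 0"
  using \<delta>_pos[of n] by simp

text \<open>For \<open>\<delta> (Suc n) \<le> d < \<delta> n\<close> every overlap count in the two comparisons of packing sums
  with cell sums is at most \<open>overlap_bound n\<close>, whose logarithm is \<open>o(\<bar>ln (\<delta> n)\<bar>)\<close> by the
  ratio hypotheses.\<close>
definition overlap_bound :: "nat \<Rightarrow> real" where
  "overlap_bound n = real (doubling_bound N (3 * \<gamma> n / \<delta> (Suc n)))"

definition comparison_constant :: "nat \<Rightarrow> real" where
  "comparison_constant n = overlap_bound n powr (q + 1) * (doubling_bound N 2 + 1)"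

lemma overlap_bound_ge: "0 < t \<Longrightarrow> t \<le> 3 * \<gamma> n / \<delta> (Suc n) \<Longrightarrow> real (doubling_bound N t) \<le> overlap_bound n"
  unfolding overlap_bound_def using doubling_bound_mono[OF N_ge_1] by simp

lemma overlap_bound_ge_1: "overlap_bound n \<ge> 1"
  unfolding overlap_bound_def by (rule doubling_bound_ge_1[OF N_ge_1])

lemma comparison_constant_ge_1: "comparison_constant n \<ge> 1"
proof -
  have "overlap_bound n powr (q + 1) \<ge> 1"
    using overlap_bound_ge_1 q_nonneg by (intro ge_one_powr_ge_zero) auto
  moreover have "(1::real) \<le> doubling_bound N 2 + 1" by simp
  ultimately have "1 * 1 \<le> overlap_bound n powr (q + 1) * (doubling_bound N 2 + 1)"
    by (intro mult_mono) auto
  then show ?thesis unfolding comparison_constant_def by simp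
qed

lemma ln_comparison_constant_le:
  "ln (comparison_constant n) \<le>
    (q + 1) * ((ln 6 + ln (\<gamma> n) - ln (\<delta> (Suc n))) / ln 2 + 1) * ln N + ln (doubling_bound N 2 + 1)"
proof -
  define t where "t = 3 * \<gamma> n / \<delta> (Suc n)"
  have "\<delta> (Suc n) \<le> \<gamma> n" using \<delta>_Suc_le[of n] \<delta>_le_\<gamma>[of n] by linarith
  then have "t \<ge> 1/2" unfolding t_def using \<delta>_pos[of "Suc n"] by (simp add: field_simps)
  then have "ln (overlap_bound n) \<le> (log 2 (2 * t) + 1) * ln N"
    unfolding overlap_bound_def t_def[symmetric] by (rule ln_doubling_bound_le[OF N_ge_1])
  also have "log 2 (2 * t) = (ln 6 + ln (\<gamma> n) - ln (\<delta> (Suc n))) / ln 2"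
    unfolding t_def log_def using \<gamma>_pos[of n] \<delta>_pos[of "Suc n"] by (simp add: ln_div ln_mult)
  finally have "(q + 1) * ln (overlap_bound n) \<le>
      (q + 1) * (((ln 6 + ln (\<gamma> n) - ln (\<delta> (Suc n))) / ln 2 + 1) * ln N)"
    using q_nonneg by (intro mult_left_mono) auto
  moreover have "ln (comparison_constant n) = (q + 1) * ln (overlap_bound n) + ln (doubling_bound N 2 + 1)"
    unfolding comparison_constant_def using overlap_bound_ge_1[of n] by (simp add: ln_mult ln_powr)
  ultimately show ?thesis by (simp add: mult.assoc)
qed

lemma ln_comparison_constant_div_ln_\<delta>: "(\<lambda>n. ln (comparison_constant n) / ln (\<delta> n)) \<longlonglongrightarrow> 0"
proof -
  define a where "a = (q + 1) * (ln 6 / ln 2 + 1) * ln N + ln (doubling_bound N 2 + 1)"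
  define b where "b = (q + 1) * ln N / ln 2"
  have upper: "ln (comparison_constant n) \<le> a + b * (ln (\<gamma> n) - ln (\<delta> (Suc n)))" for n
  proof -
    have "(q + 1) * ((ln 6 + ln (\<gamma> n) - ln (\<delta> (Suc n))) / ln 2 + 1) * ln N + ln (doubling_bound N 2 + 1)
        = a + b * (ln (\<gamma> n) - ln (\<delta> (Suc n)))"
      unfolding a_def b_def by (simp add: field_simps)
    then show ?thesis using ln_comparison_constant_le[of n] by simp
  qed
  have ln_\<delta>: "filterlim (\<lambda>n. ln (\<delta> n)) at_infinity sequentially"
    using filterlim_compose[OF ln_at_0 \<delta>_at_right_0] at_bot_le_at_infinity filterlim_mono by blast
  have inv_ratio: "(\<lambda>n. ln (\<delta> (Suc n)) / ln (\<delta> n)) \<longlonglongrightarrow> 1"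
    using tendsto_inverse[OF \<delta>_ratio] by simp
  have "(\<lambda>n. a / ln (\<delta> n) + b * (ln (\<gamma> n) / ln (\<delta> n) - ln (\<delta> (Suc n)) / ln (\<delta> n))) \<longlonglongrightarrow> 0 + b * (1 - 1)"
    by (intro tendsto_intros tendsto_divide_0[OF tendsto_const ln_\<delta>] \<gamma>\<delta>_ratio inv_ratio)
  then have lim: "(\<lambda>n. (a + b * (ln (\<gamma> n) - ln (\<delta> (Suc n)))) / ln (\<delta> n)) \<longlonglongrightarrow> 0"
    by (simp add: add_divide_distrib diff_divide_distrib right_diff_distrib)
  show ?thesis
  proof (rule tendsto_sandwich[OF _ _ lim tendsto_const])
    show "\<forall>\<^sub>F n in sequentially. (a + b * (ln (\<gamma> n) - ln (\<delta> (Suc n)))) / ln (\<delta> n) \<le> ln (comparison_constant n) / ln (\<delta> n)"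
      using eventually_\<delta>_less_1
      by eventually_elim (intro divide_right_mono_neg upper less_imp_le ln_\<delta>_neg)
    show "\<forall>\<^sub>F n in sequentially. ln (comparison_constant n) / ln (\<delta> n) \<le> 0"
      using eventually_\<delta>_less_1
      by eventually_elim (intro divide_nonneg_neg ln_ge_zero comparison_constant_ge_1 ln_\<delta>_neg)
  qed
qed

lemma ln_comparison_constant_div_ln_\<delta>_Suc: "(\<lambda>n. ln (comparison_constant n) / ln (\<delta> (Suc n))) \<longlonglongrightarrow> 0"
proof -
  have "(\<lambda>n. ln (comparison_constant n) / ln (\<delta> n) * (ln (\<delta> n) / ln (\<delta> (Suc n)))) \<longlonglongrightarrow> 0 * 1"
    by (rule tendsto_mult[OF ln_comparison_constant_div_ln_\<delta> \<delta>_ratio])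
  moreover have "\<forall>\<^sub>F n in sequentially. ln (comparison_constant n) / ln (\<delta> n) * (ln (\<delta> n) / ln (\<delta> (Suc n)))
      = ln (comparison_constant n) / ln (\<delta> (Suc n))"
    using eventually_\<delta>_less_1 by eventually_elim (use ln_\<delta>_neg in fastforce)
  ultimately show ?thesis by (simp add: Lim_transform_eventually)
qed

lemma overlap_bound_powr_le: "overlap_bound n powr (q + 1) \<le> comparison_constant n"
  using mult_left_mono[of 1 "doubling_bound N 2 + 1" "overlap_bound n powr (q + 1)"]
  unfolding comparison_constant_def by simp

lemma packing_sum_le_cell_sums:
  fixes x :: 'a
  assumes d: "\<delta> (Suc n) \<le> d" "d < \<delta> n" "d \<le> r"
  shows "packing_sum x r d \<le> comparison_constant n * cell_sum x n (2 * r)"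
    and "packing_sum x r d \<le> comparison_constant n * cell_sum x (Suc n) (2 * r)"
proof -
  have d_pos: "d > 0" using d(1) \<delta>_pos[of "Suc n"] by linarith
  have d_\<gamma>: "d \<le> \<gamma> n" using d(2) \<delta>_le_\<gamma>[of n] by linarith
  have "(d + 2 * \<gamma> n) / \<delta> n \<le> 3 * \<gamma> n / \<delta> (Suc n)"
    using d_\<gamma> \<delta>_Suc_le[of n] \<delta>_pos[of "Suc n"] \<gamma>_pos[of n] by (intro frac_le) simp_all
  then have cells_n: "real (doubling_bound N ((d + 2 * \<gamma> n) / \<delta> n)) \<le> overlap_bound n"
    using d_pos \<delta>_pos[of n] \<gamma>_pos[of n] by (intro overlap_bound_ge) simp_all
  have "(d + 2 * \<gamma> (Suc n)) / \<delta> (Suc n) \<le> 3 * \<gamma> n / \<delta> (Suc n)"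
    using d_\<gamma> \<gamma>_Suc_le[of n] \<delta>_pos[of "Suc n"] by (intro divide_right_mono) simp_all
  then have cells_Suc: "real (doubling_bound N ((d + 2 * \<gamma> (Suc n)) / \<delta> (Suc n))) \<le> overlap_bound n"
    using d_pos \<delta>_pos[of "Suc n"] \<gamma>_pos[of "Suc n"] by (intro overlap_bound_ge) simp_all
  have balls: "real (doubling_bound N ((\<gamma> m + d) / d)) \<le> overlap_bound n" if "\<gamma> m \<le> \<gamma> n" for m
  proof (rule overlap_bound_ge)
    show "0 < (\<gamma> m + d) / d" using d_pos \<gamma>_pos[of m] by simp
    have "(\<gamma> m + d) / d \<le> (2 * \<gamma> n) / \<delta> (Suc n)"
      using that d_\<gamma> d_pos d(1) \<delta>_pos[of "Suc n"] by (intro frac_le) simp_all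
    also have "\<dots> \<le> 3 * \<gamma> n / \<delta> (Suc n)" using \<gamma>_pos[of n] \<delta>_pos[of "Suc n"] by (simp add: divide_right_mono)
    finally show "(\<gamma> m + d) / d \<le> 3 * \<gamma> n / \<delta> (Suc n)" .
  qed
  show "packing_sum x r d \<le> comparison_constant n * cell_sum x n (2 * r)"
    using packing_sum_le_cell_sum[OF d_pos d(3) overlap_bound_ge_1 cells_n balls[OF order_refl]]
      overlap_bound_powr_le cell_sum_nonneg by (meson mult_right_mono order_trans)
  show "packing_sum x r d \<le> comparison_constant n * cell_sum x (Suc n) (2 * r)"
    using packing_sum_le_cell_sum[OF d_pos d(3) overlap_bound_ge_1 cells_Suc balls[OF \<gamma>_Suc_le]]
      overlap_bound_powr_le cell_sum_nonneg by (meson mult_right_mono order_trans)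
qed

lemma cell_sum_le_packing_sum_scaled:
  fixes x :: 'a
  assumes x: "x \<in> spt \<mu>" and r: "r > 0" "2 * \<gamma> n \<le> r"
  shows "cell_sum x n r \<le> comparison_constant n * packing_sum x (2 * r) (\<delta> n)"
proof -
  have "(\<delta> n + 2 * \<gamma> n) / \<delta> n \<le> 3 * \<gamma> n / \<delta> (Suc n)" "(\<gamma> n + \<delta> n) / \<delta> n \<le> 3 * \<gamma> n / \<delta> (Suc n)"
    using \<delta>_le_\<gamma>[of n] \<delta>_Suc_le[of n] \<delta>_pos[of "Suc n"] \<gamma>_pos[of n] by (auto intro!: frac_le)
  then have "real (doubling_bound N ((\<delta> n + 2 * \<gamma> n) / \<delta> n)) \<le> overlap_bound n"
    "real (doubling_bound N ((\<gamma> n + \<delta> n) / \<delta> n)) \<le> overlap_bound n"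
    using \<delta>_pos[of n] \<gamma>_pos[of n] by (auto intro!: overlap_bound_ge)
  from cell_sum_le_packing_sum[OF x r overlap_bound_ge_1 this] show ?thesis
    unfolding comparison_constant_def by (simp add: mult.assoc)
qed

lemma packing_ratio_ge_bracket:
  fixes x :: 'a
  assumes x: "x \<in> spt \<mu>" and r: "r > 0" and n: "\<delta> n < 1"
    and d: "\<delta> (Suc n) \<le> d" "d < \<delta> n" "d \<le> r"
  shows "min (ln (cell_sum x n (2 * r)) / ln (\<delta> n)) (ln (cell_sum x (Suc n) (2 * r)) / ln (\<delta> (Suc n)))
      + min (ln (comparison_constant n) / ln (\<delta> n)) (ln (comparison_constant n) / ln (\<delta> (Suc n)))
    \<le> ln (packing_sum x r d) / ln d"
proof (rule ln_ratio_bracket)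
  have d_pos: "d > 0" using d(1) \<delta>_pos[of "Suc n"] by linarith
  have S: "packing_sum x r d > 0" using packing_sum_pos[OF x d_pos] r by simp
  have C: "comparison_constant n > 0" using comparison_constant_ge_1[of n] by simp
  have Q: "cell_sum x m (2 * r) > 0" for m using cell_sum_pos[OF x] r by simp
  show "ln (packing_sum x r d) \<le> ln (comparison_constant n) + ln (cell_sum x n (2 * r))"
    using S C Q packing_sum_le_cell_sums(1)[OF d, where x=x] by (rule ln_le_of_le_mult)
  show "ln (packing_sum x r d) \<le> ln (comparison_constant n) + ln (cell_sum x (Suc n) (2 * r))"
    using S C Q packing_sum_le_cell_sums(2)[OF d, where x=x] by (rule ln_le_of_le_mult)
  show "ln (\<delta> (Suc n)) \<le> ln d" "ln d \<le> ln (\<delta> n)" "ln (\<delta> n) < 0"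
    using d d_pos \<delta>_pos[of "Suc n"] ln_\<delta>_neg[OF n] by simp_all
qed

lemma cell_ratio_ge:
  fixes x :: 'a
  assumes x: "x \<in> spt \<mu>" and r: "r > 0" "2 * \<gamma> n \<le> r" and n: "\<delta> n < 1"
  shows "ln (packing_sum x (2 * r) (\<delta> n)) / ln (\<delta> n) + ln (comparison_constant n) / ln (\<delta> n)
    \<le> ln (cell_sum x n r) / ln (\<delta> n)"
proof -
  have S: "packing_sum x (2 * r) (\<delta> n) > 0" using packing_sum_pos[OF x \<delta>_pos] r by simp
  have C: "comparison_constant n > 0" using comparison_constant_ge_1[of n] by simp
  have "ln (cell_sum x n r) \<le> ln (comparison_constant n) + ln (packing_sum x (2 * r) (\<delta> n))"
    using cell_sum_pos[OF x r(1)] C S cell_sum_le_packing_sum_scaled[OF x r] by (rule ln_le_of_le_mult)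
  then show ?thesis using ln_\<delta>_neg[OF n] by (simp add: add_divide_distrib[symmetric] divide_right_mono_neg)
qed

definition cell_exponent :: "'a \<Rightarrow> real \<Rightarrow> ereal" where
  "cell_exponent x r = Liminf sequentially (\<lambda>n. ereal (ln (cell_sum x n r) / ln (\<delta> n)))"

lemma cell_exponent_le_packing_exponent:
  fixes x :: 'a
  assumes x: "x \<in> spt \<mu>" and r: "r > 0"
  shows "cell_exponent x (2 * r) \<le> packing_exponent x r"
  unfolding cell_exponent_def packing_exponent_def
proof (rule Liminf_sequentially_le_Liminf_at_right_0[OF \<delta>_dec \<delta>_lim \<delta>_pos])
  show "(\<lambda>n. min (ln (comparison_constant n) / ln (\<delta> n)) (ln (comparison_constant n) / ln (\<delta> (Suc n))))
      \<longlonglongrightarrow> 0"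
    using tendsto_min[OF ln_comparison_constant_div_ln_\<delta> ln_comparison_constant_div_ln_\<delta>_Suc] by simp
  have "\<forall>\<^sub>F n in sequentially. \<delta> n < 1 \<and> \<delta> n < r"
    using eventually_\<delta>_less_1 order_tendstoD(2)[OF \<delta>_lim r] by eventually_elim simp
  then show "\<forall>\<^sub>F n in sequentially. \<forall>d. \<delta> (Suc n) \<le> d \<and> d < \<delta> n \<longrightarrow>
      min (ln (cell_sum x n (2 * r)) / ln (\<delta> n)) (ln (cell_sum x (Suc n) (2 * r)) / ln (\<delta> (Suc n)))
      + min (ln (comparison_constant n) / ln (\<delta> n)) (ln (comparison_constant n) / ln (\<delta> (Suc n)))
      \<le> ln (packing_sum x r d) / ln d"
    by eventually_elim (use packing_ratio_ge_bracket[OF x r] in auto)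
qed

lemma packing_exponent_le_cell_exponent:
  fixes x :: 'a
  assumes x: "x \<in> spt \<mu>" and r: "r > 0"
  shows "packing_exponent x (2 * r) \<le> cell_exponent x r"
  unfolding cell_exponent_def packing_exponent_def
proof (rule Liminf_at_right_0_le_Liminf_sequentially[OF \<delta>_at_right_0 ln_comparison_constant_div_ln_\<delta>])
  have "r / 2 > 0" using r by simp
  from eventually_\<delta>_less_1 order_tendstoD(2)[OF \<gamma>_lim this]
  have "\<forall>\<^sub>F n in sequentially. \<delta> n < 1 \<and> \<gamma> n < r / 2" by (rule eventually_conj)
  then show "\<forall>\<^sub>F n in sequentially. ln (packing_sum x (2 * r) (\<delta> n)) / ln (\<delta> n) +
      ln (comparison_constant n) / ln (\<delta> n) \<le> ln (cell_sum x n r) / ln (\<delta> n)"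
    by eventually_elim (use cell_ratio_ge[OF x r] in auto)
qed

lemma cell_exponent_tendsto:
  fixes x :: 'a
  assumes x: "x \<in> spt \<mu>"
  shows "(cell_exponent x \<longlongrightarrow> Lim (at_right 0) (packing_exponent x)) (at_right 0)"
  using packing_exponent_antimono[OF x] packing_exponent_le_cell_exponent[OF x]
    cell_exponent_le_packing_exponent[OF x]
  by (rule tendsto_at_right_0_scaled_sandwich)


lemma cell_exponent_tendsto_tau_q:
  fixes x :: 'a
  assumes x: "x \<in> spt \<mu>"
  shows "((\<lambda>r. Liminf sequentially (\<lambda>n.
      ereal (ln (enn2real (\<Sum>\<^sub>\<infinity>A\<in>{A\<in>Q n. A \<inter> cball x r \<noteq> {}}. mpow \<mu> q A)) / ln (\<delta> n))))
    \<longlongrightarrow> tau_q \<mu> q x) (at_right 0)"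
proof -
  have "\<forall>\<^sub>F r in at_right 0. cell_exponent x r = Liminf sequentially (\<lambda>n.
      ereal (ln (enn2real (\<Sum>\<^sub>\<infinity>A\<in>{A\<in>Q n. A \<inter> cball x r \<noteq> {}}. mpow \<mu> q A)) / ln (\<delta> n)))"
    using eventually_at_right_less[of 0]
    by eventually_elim (simp add: cell_exponent_def infsum_cells_eq_cell_sum)
  with cell_exponent_tendsto[OF x] show ?thesis
    unfolding tau_q_eq_Lim_packing_exponent by (rule Lim_transform_eventually)
qed
end

theorem proposition3p2:
  fixes \<mu> :: "'a::complete_space set \<Rightarrow> ennreal"
    and \<delta> \<gamma> :: "nat \<Rightarrow> real"
    and Q :: "nat \<Rightarrow> 'a set set"
    and E :: "'a set"
    and q :: real
  assumes doubling: "doubling_space TYPE('a)"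
    and \<delta>_pos: "\<And>n. \<delta> n > 0" and \<delta>_dec: "decseq \<delta>"
    and \<gamma>_pos: "\<And>n. \<gamma> n > 0" and \<gamma>_dec: "decseq \<gamma>"
    and \<delta>_le_\<gamma>: "\<And>n. \<delta> n \<le> \<gamma> n"
    and \<gamma>_lim: "\<gamma> \<longlonglongrightarrow> 0"
    and \<delta>_ratio: "(\<lambda>n. ln (\<delta> n) / ln (\<delta> (Suc n))) \<longlonglongrightarrow> 1"
    and \<gamma>\<delta>_ratio: "(\<lambda>n. ln (\<gamma> n) / ln (\<delta> n)) \<longlonglongrightarrow> 1"
    and Q_disj: "\<And>n. \<forall>A\<in>Q n. \<forall>B\<in>Q n. A \<noteq> B \<longrightarrow> A \<inter> B = {}"
    and Q_borel: "\<And>n. Q n \<subseteq> sets borel"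
    and Q_inner: "\<And>n A. A \<in> Q n \<Longrightarrow> \<exists>c. cball c (\<delta> n) \<subseteq> A"
    and Q_outer: "\<And>n A. A \<in> Q n \<Longrightarrow> \<exists>c. A \<subseteq> cball c (\<gamma> n)"
    and E_def: "E = (\<Inter>n. \<Union>(Q n))"
    and \<mu>_meas: "is_measure \<mu>"
    and \<mu>_nonatomic: "\<And>y. \<mu> {y} = 0"
    and \<mu>_E: "\<mu> (UNIV - E) = 0"
    and q_nonneg: "q \<ge> 0"
  shows "\<forall>x\<in>spt \<mu>.
    ((\<lambda>r. Liminf sequentially (\<lambda>n.
        ereal (ln (enn2real (\<Sum>\<^sub>\<infinity>A\<in>{A\<in>Q n. A \<inter> cball x r \<noteq> {}}. mpow \<mu> q A)) / ln (\<delta> n))))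
      \<longlongrightarrow> tau_q \<mu> q x) (at_right 0)"
proof -
  obtain N where N: "N \<ge> 1" and N_doubling: "\<forall>(x::'a) r. r > 0 \<longrightarrow>
      (\<exists>C. finite C \<and> card C \<le> N \<and> cball x r \<subseteq> (\<Union>c\<in>C. cball c (r/2)))"
    using doubling_space_constant[OF doubling] by blast
  interpret regular_cell_system \<mu> N q \<delta> \<gamma> Q E
    by unfold_locales (fact N N_doubling[rule_format] \<mu>_meas q_nonneg \<delta>_pos \<gamma>_pos Q_disj Q_inner Q_outer
        E_def \<mu>_E \<delta>_dec \<gamma>_dec \<delta>_le_\<gamma> \<gamma>_lim \<delta>_ratio \<gamma>\<delta>_ratio)+
  show ?thesis using cell_exponent_tendsto_tau_q by blast
qed

end
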